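(* Let $F$ be a $4$-regular graph, let $P$ be a circuit partition of $F$, and let $E\subseteq E(F)$ be such that each circuit of $P$ traverses at most one edge of $E$. If $\Gamma$ is a cycle spanning set of $F-E$, then $\pi_P(\Gamma\setminus P)$ is a cycle spanning set of $\mathrm{Tch}(P)$. If moreover $\Gamma$ is integral, then $\pi_P(\Gamma\setminus P)$ is an integral cycle spanning set of $\mathrm{Tch}(P)$.
   Context: Graphs: $G=(V,H,E,\epsilon)$ with finite sets of vertices $V$ and half-edges $H$, a partition $E$ of $H$ into unordered pairs (edges), and $\epsilon:H\to V$; loops and multiple edges allowed. For $E'\subseteq E(G)$, $G-E'$ is obtained by deleting the edges of $E'$. A directed version orders each edge as (tail, head). A single transition is an unordered pair of distinct half-edges incident with a common vertex; a directed single transition is such an ordered pair. A closed walk is a sequence $((h_1,h_2),\dots,(h_{n-1},h_n))$ of directed single transitions with $\{h_2,h_3\},\{h_4,h_5\},\dots,\{h_n,h_1\}$ edges, up to cyclic shift. For a directed version $D$ and closed walk $W$, $\sigma(D,W)\in\mathbb Z^{E}$ counts, at each edge $e$, traversals of $e$ along its direction minus traversals against it. A circuit is a nonempty closed walk using each half-edge at most once, with orientation forgotten. The cycle space of $D$ is the right null space over $\mathbb Q$ of its vertex-edge incidence matrix (entry $1$ if $v$ is incident to the tail but not head of $e$, $-1$ if to the head but not tail, $0$ otherwise). A cycle basis of $G$ is a set $B$ of closed walks such that the vectors $\sigma(D,W)$, $W\in B$, are pairwise distinct and form a basis of the cycle space of $D$. A cycle spanning set is a set of closed walks containing a cycle basis.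 A cycle spanning set $B$ is integral if $\sigma(D,W)$ lies in the $\mathbb Z$-span of $\{\sigma(D,W'):W'\in B\}$ for every closed walk $W$ of $G$. $F$ is $4$-regular if every vertex is incident with exactly $4$ half-edges. A transition at $v$ is a partition of the four half-edges at $v$ into two single transitions. A circuit partition $P$ is a set of circuits of $F$ such that every half-edge lies in exactly one single transition of exactly one circuit of $P$; $\tau(P)$ is the set of transitions both of whose single transitions occur in circuits of $P$. The touch-graph $\mathrm{Tch}(P)$ has vertex set $P$, half-edge set the set of single transitions occurring in circuits of $P$, edge set $\tau(P)$, and maps each single transition to the circuit containing it. For a closed walk $W$ of $F$, $\pi_P(W)$ is obtained by replacing each directed single transition $(h,h')$ of $W$ by $(s,s')$, where $s,s'$ are the single transitions of circuits of $P$ containing $h,h'$ respectively, and deleting the pairs with $s=s'$; it is a closed walk of $\mathrm{Tch}(P)$ in which each remaining pair $(s,s')$ traverses the edge $\{s,s'\}$ from half-edge $s$ to half-edge $s'$. For a set $S$ of closed walks, $\pi_P(S)$ is the multiset $\{\pi_P(W):W\in S\}$; $\Gamma\setminus P$ denotes $\Gamma$ with (any orientations of) circuits of $P$ removed. *)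

theory Defs
  imports Complex_Main
begin

record ('v, 'h) graph =
  gverts :: "'v set"
  ghalfs :: "'h set"
  gedges :: "'h set set"
  ginc   :: "'h \<Rightarrow> 'v"

definition wf_graph :: "('v, 'h) graph \<Rightarrow> bool" where
  "wf_graph G \<longleftrightarrow> finite (gverts G) \<and> finite (ghalfs G)
     \<and> ginc G ` ghalfs G \<subseteq> gverts G
     \<and> (\<forall>e\<in>gedges G. e \<subseteq> ghalfs G \<and> card e = 2)
     \<and> (\<forall>h\<in>ghalfs G. \<exists>!e. e \<in> gedges G \<and> h \<in> e)"

definition four_regular :: "('v, 'h) graph \<Rightarrow> bool" where
  "four_regular G \<longleftrightarrow> (\<forall>v\<in>gverts G. card {h\<in>ghalfs G. ginc G h = v} = 4)"

definition del_edges :: "('v, 'h) graph \<Rightarrow> 'h set set \<Rightarrow> ('v, 'h) graph" where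
  "del_edges G E' = G\<lparr>ghalfs := ghalfs G - \<Union>E', gedges := gedges G - E'\<rparr>"

text \<open>A directed version: for every edge, its tail half-edge (the other one is the head).\<close>
definition orientation :: "('v, 'h) graph \<Rightarrow> ('h set \<Rightarrow> 'h) \<Rightarrow> bool" where
  "orientation G D \<longleftrightarrow> (\<forall>e\<in>gedges G. D e \<in> e)"

definition head_of :: "('h set \<Rightarrow> 'h) \<Rightarrow> 'h set \<Rightarrow> 'h" where
  "head_of D e = (THE h. h \<in> e \<and> h \<noteq> D e)"

definition inc_mat :: "('v, 'h) graph \<Rightarrow> ('h set \<Rightarrow> 'h) \<Rightarrow> 'v \<Rightarrow> 'h set \<Rightarrow> rat" where
  "inc_mat G D v e =
     (if v = ginc G (D e) \<and> v \<noteq> ginc G (head_of D e) then 1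
      else if v = ginc G (head_of D e) \<and> v \<noteq> ginc G (D e) then -1 else 0)"

definition cycle_space :: "('v, 'h) graph \<Rightarrow> ('h set \<Rightarrow> 'h) \<Rightarrow> ('h set \<Rightarrow> rat) set" where
  "cycle_space G D = {x. (\<forall>e. e \<notin> gedges G \<longrightarrow> x e = 0)
      \<and> (\<forall>v\<in>gverts G. (\<Sum>e\<in>gedges G. inc_mat G D v e * x e) = 0)}"

definition rat_span :: "('e \<Rightarrow> rat) set \<Rightarrow> ('e \<Rightarrow> rat) set" where
  "rat_span X = {(\<lambda>e. \<Sum>x\<in>S. c x * x e) | S c. finite S \<and> S \<subseteq> X}"

definition rat_lin_indep :: "('e \<Rightarrow> rat) set \<Rightarrow> bool" where
  "rat_lin_indep X \<longleftrightarrow> (\<forall>S c. finite S \<and> S \<subseteq> X \<and> (\<lambda>e. \<Sum>x\<in>S. c x * x e) = (\<lambda>e. 0)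
      \<longrightarrow> (\<forall>x\<in>S. c x = 0))"

definition int_span :: "('e \<Rightarrow> int) set \<Rightarrow> ('e \<Rightarrow> int) set" where
  "int_span X = {(\<lambda>e. \<Sum>x\<in>S. c x * x e) | S c. finite S \<and> S \<subseteq> X}"

definition is_basis_of_cycle_space ::
  "('v, 'h) graph \<Rightarrow> ('h set \<Rightarrow> 'h) \<Rightarrow> ('h set \<Rightarrow> rat) set \<Rightarrow> bool" where
  "is_basis_of_cycle_space G D X \<longleftrightarrow>
     X \<subseteq> cycle_space G D \<and> rat_lin_indep X \<and> cycle_space G D \<subseteq> rat_span X"

text \<open>A closed walk ((h1,h2),...,(h_{n-1},h_n)) is a list of directed single transitions
  (pairs of distinct half-edges at a common vertex) such that h2 h3, ..., hn h1 form edges.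
  Cyclic shifts are different lists representing the same closed walk.\<close>
definition closed_walk :: "('v, 'h) graph \<Rightarrow> ('h \<times> 'h) list \<Rightarrow> bool" where
  "closed_walk G w \<longleftrightarrow>
     (\<forall>(a, b)\<in>set w. a \<in> ghalfs G \<and> b \<in> ghalfs G \<and> a \<noteq> b \<and> ginc G a = ginc G b)
     \<and> (\<forall>i<length w. {snd (w ! i), fst (w ! (Suc i mod length w))} \<in> gedges G)"

definition etrav :: "('h \<times> 'h) list \<Rightarrow> ('h \<times> 'h) list" where
  "etrav w = map (\<lambda>i. (snd (w ! i), fst (w ! (Suc i mod length w)))) [0..<length w]"

definition sigma_trav :: "('v, 'h) graph \<Rightarrow> ('h set \<Rightarrow> 'h) \<Rightarrow> ('h \<times> 'h) list \<Rightarrow> 'h set \<Rightarrow> int" where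
  "sigma_trav G D ts e =
     (if e \<in> gedges G then
        sum_list (map (\<lambda>(a, b). if {a, b} = e then (if a = D e then 1 else -1) else 0) ts)
      else 0)"

definition sigma :: "('v, 'h) graph \<Rightarrow> ('h set \<Rightarrow> 'h) \<Rightarrow> ('h \<times> 'h) list \<Rightarrow> 'h set \<Rightarrow> int" where
  "sigma G D w = sigma_trav G D (etrav w)"

definition rat_vec :: "('e \<Rightarrow> int) \<Rightarrow> ('e \<Rightarrow> rat)" where
  "rat_vec x = (\<lambda>e. of_int (x e))"

text \<open>Cycle spanning set, generic in the representation of walks: cw says which objects are
  closed walks, sig D W is the vector sigma(D,W). It must hold for every directed version
  (the notion does not depend on the choice).\<close>
definition cycle_spanning_set ::
  "('v, 'h) graph \<Rightarrow> ('w \<Rightarrow> bool) \<Rightarrow> (('h set \<Rightarrow> 'h) \<Rightarrow> 'w \<Rightarrow> 'h set \<Rightarrow> int) \<Rightarrow> 'w set \<Rightarrow> bool" where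
  "cycle_spanning_set G cw sig \<Gamma> \<longleftrightarrow> (\<forall>W\<in>\<Gamma>. cw W) \<and>
     (\<forall>D. orientation G D \<longrightarrow>
        (\<exists>B\<subseteq>\<Gamma>. inj_on (sig D) B \<and> is_basis_of_cycle_space G D ((\<lambda>W. rat_vec (sig D W)) ` B)))"

definition integral_set ::
  "('v, 'h) graph \<Rightarrow> (('h set \<Rightarrow> 'h) \<Rightarrow> 'w \<Rightarrow> 'h set \<Rightarrow> int) \<Rightarrow> 'w set \<Rightarrow> bool" where
  "integral_set G sig \<Gamma> \<longleftrightarrow>
     (\<forall>D. orientation G D \<longrightarrow>
        (\<forall>W. closed_walk G W \<longrightarrow> sigma G D W \<in> int_span (sig D ` \<Gamma>)))"

definition walk_halfs :: "('h \<times> 'h) list \<Rightarrow> 'h list" where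
  "walk_halfs w = concat (map (\<lambda>(a, b). [a, b]) w)"

definition rev_walk :: "('h \<times> 'h) list \<Rightarrow> ('h \<times> 'h) list" where
  "rev_walk w = rev (map (\<lambda>(a, b). (b, a)) w)"

text \<open>A circuit (orientation and cyclic shift forgotten) is represented by the set of all
  cyclic shifts of both of its orientations.\<close>
definition circ_class :: "('h \<times> 'h) list \<Rightarrow> ('h \<times> 'h) list set" where
  "circ_class w = {rotate k w | k. True} \<union> {rotate k (rev_walk w) | k. True}"

definition is_circuit :: "('v, 'h) graph \<Rightarrow> ('h \<times> 'h) list set \<Rightarrow> bool" where
  "is_circuit G C \<longleftrightarrow> (\<exists>w. closed_walk G w \<and> w \<noteq> [] \<and> distinct (walk_halfs w) \<and> C = circ_class w)"

definition trans_of :: "('h \<times> 'h) list set \<Rightarrow> 'h set set" where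
  "trans_of C = {{a, b} | a b. \<exists>w\<in>C. (a, b) \<in> set w}"

definition traversed :: "('h \<times> 'h) list set \<Rightarrow> 'h set set" where
  "traversed C = {{a, b} | a b. \<exists>w\<in>C. (a, b) \<in> set (etrav w)}"

definition circuit_partition :: "('v, 'h) graph \<Rightarrow> ('h \<times> 'h) list set set \<Rightarrow> bool" where
  "circuit_partition G P \<longleftrightarrow> (\<forall>C\<in>P. is_circuit G C) \<and>
     (\<forall>h\<in>ghalfs G. \<exists>!p. fst p \<in> P \<and> snd p \<in> trans_of (fst p) \<and> h \<in> snd p)"

definition transition_at :: "('v, 'h) graph \<Rightarrow> 'v \<Rightarrow> 'h set set \<Rightarrow> bool" where
  "transition_at G v t \<longleftrightarrow> v \<in> gverts G \<and>
     (\<exists>s1 s2. t = {s1, s2} \<and> card s1 = 2 \<and> card s2 = 2 \<and> s1 \<inter> s2 = {}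
        \<and> s1 \<union> s2 = {h\<in>ghalfs G. ginc G h = v})"

definition tau :: "('v, 'h) graph \<Rightarrow> ('h \<times> 'h) list set set \<Rightarrow> 'h set set set" where
  "tau G P = {t. (\<exists>v. transition_at G v t) \<and> t \<subseteq> \<Union>(trans_of ` P)}"

definition Tch :: "('v, 'h) graph \<Rightarrow> ('h \<times> 'h) list set set \<Rightarrow> (('h \<times> 'h) list set, 'h set) graph" where
  "Tch G P = \<lparr>gverts = P, ghalfs = \<Union>(trans_of ` P), gedges = tau G P,
              ginc = (\<lambda>s. THE C. C \<in> P \<and> s \<in> trans_of C)\<rparr>"

definition st_of :: "('h \<times> 'h) list set set \<Rightarrow> 'h \<Rightarrow> 'h set" where
  "st_of P h = (THE s. \<exists>C\<in>P. s \<in> trans_of C \<and> h \<in> s)"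

text \<open>pi_P(W), given as the sequence of edge traversals (s,s') of Tch(P).\<close>
definition proj :: "('h \<times> 'h) list set set \<Rightarrow> ('h \<times> 'h) list \<Rightarrow> ('h set \<times> 'h set) list" where
  "proj P w = filter (\<lambda>(s, s'). s \<noteq> s') (map (\<lambda>(a, b). (st_of P a, st_of P b)) w)"

definition trav_closed_walk :: "('v, 'h) graph \<Rightarrow> ('h \<times> 'h) list \<Rightarrow> bool" where
  "trav_closed_walk G ts \<longleftrightarrow> (\<forall>(a, b)\<in>set ts. {a, b} \<in> gedges G) \<and>
     (\<forall>i<length ts. ginc G (snd (ts ! i)) = ginc G (fst (ts ! (Suc i mod length ts))))"

text \<open>Gamma \ P: remove the walks that are (any orientation / cyclic shift of) circuits of P.\<close>
definition remove_circuits :: "('h \<times> 'h) list set \<Rightarrow> ('h \<times> 'h) list set set \<Rightarrow> ('h \<times> 'h) list set" where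
  "remove_circuits \<Gamma> P = {W\<in>\<Gamma>. \<forall>C\<in>P. W \<notin> C}"

end

theory Submission
  imports Defs "HOL-Library.Function_Algebras"
begin

text \<open>
  For a closed walk \<open>W\<close> of \<open>F - E\<close> and a transition \<open>t\<close> of \<open>Tch(P)\<close> with chosen single
  transition \<open>D t\<close>, the signed number of traversals of \<open>t\<close> by \<open>\<pi>\<^sub>P(W)\<close> is the number of
  times \<open>W\<close> enters \<open>D t\<close> minus the number of times it leaves it, i.e. a signed sum of the
  entries of \<open>\<sigma>(W)\<close> at the two edges through the half-edges of \<open>D t\<close>. So
  \<open>\<sigma>(\<pi>\<^sub>P(W)) = L(\<sigma>(W))\<close> for a linear map \<open>L\<close> (\<open>touch_map\<close>), over \<open>\<rat>\<close> as well as over \<open>\<int>\<close>, and circuits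
  of \<open>P\<close> project to the empty walk.

  Conversely every nonbacktracking closed walk of \<open>Tch(P)\<close> is \<open>\<pi>\<^sub>P\<close> of a closed walk of
  \<open>F - E\<close>: a traversal of a transition is realised at its vertex, and two consecutive
  traversals are joined along their common circuit, in the direction that avoids the at
  most one edge of \<open>E\<close> on that circuit. Since the cycle space of \<open>Tch(P)\<close> is spanned by
  nonbacktracking closed walks (peel off closed walks found in the support of a cycle-space
  vector), and closed walks of \<open>Tch(P)\<close> are nonbacktracking as sequences of edge traversals,
  both statements follow by applying \<open>L\<close> to the span of \<open>\<Gamma>\<close>.
\<close>


definition scale_fun :: "'a::times \<Rightarrow> ('e \<Rightarrow> 'a) \<Rightarrow> 'e \<Rightarrow> 'a" where
  "scale_fun c x = (\<lambda>e. c * x e)"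

interpretation fun_module: module "scale_fun :: 'a::comm_ring_1 \<Rightarrow> ('e \<Rightarrow> 'a) \<Rightarrow> _"
  by unfold_locales (auto simp: scale_fun_def algebra_simps fun_eq_iff)

interpretation fun_vector: vector_space "scale_fun :: 'a::field \<Rightarrow> ('e \<Rightarrow> 'a) \<Rightarrow> _"
  by unfold_locales (auto simp: scale_fun_def algebra_simps fun_eq_iff)

lemma sum_fun_apply: "(\<Sum>v\<in>A. f v) x = (\<Sum>v\<in>A. f v x)"
  by (induction A rule: infinite_finite_induct) auto

lemma rat_span_eq_span: "rat_span X = fun_module.span X"
  unfolding rat_span_def fun_module.span_explicit
  by (auto simp: scale_fun_def sum_fun_apply fun_eq_iff)

lemma int_span_eq_span: "int_span X = fun_module.span X"
  unfolding int_span_def fun_module.span_explicit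
  by (auto simp: scale_fun_def sum_fun_apply fun_eq_iff)

lemma rat_lin_indep_iff_independent: "rat_lin_indep X \<longleftrightarrow> fun_module.independent X"
  unfolding rat_lin_indep_def fun_module.dependent_explicit
  by (auto simp: scale_fun_def sum_fun_apply fun_eq_iff)

definition of_int_vec :: "('e \<Rightarrow> int) \<Rightarrow> 'e \<Rightarrow> 'a::ring_1" where
  "of_int_vec x = (\<lambda>e. of_int (x e))"

lemma rat_vec_eq_of_int_vec: "rat_vec = of_int_vec"
  unfolding rat_vec_def of_int_vec_def ..

lemma of_int_vec_int [simp]: "of_int_vec x = (x :: 'e \<Rightarrow> int)"
  unfolding of_int_vec_def by simp

lemma cyclic_iff_successively:
  "(\<forall>i<length xs. R (xs!i) (xs!(Suc i mod length xs))) \<longleftrightarrow>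
     successively R xs \<and> (xs \<noteq> [] \<longrightarrow> R (last xs) (hd xs))"
proof (cases "xs = []")
  case True then show ?thesis by simp
next
  case False
  define n where "n = length xs"
  have n: "n > 0" using False n_def by simp
  have "(\<forall>i<n. R (xs!i) (xs!(Suc i mod n))) \<longleftrightarrow>
        (\<forall>i. Suc i < n \<longrightarrow> R (xs!i) (xs!Suc i)) \<and> R (xs!(n-1)) (xs!0)"
  proof safe
    fix i assume a: "\<forall>i<n. R (xs!i) (xs!(Suc i mod n))" "Suc i < n"
    then show "R (xs!i) (xs!Suc i)" using a(1)[rule_format, of i] by simp
  next
    assume a: "\<forall>i<n. R (xs!i) (xs!(Suc i mod n))"
    then show "R (xs!(n-1)) (xs!0)" using n a[rule_format, of "n-1"] by simp
  next
    fix i assume a: "\<forall>i. Suc i < n \<longrightarrow> R (xs!i) (xs!Suc i)" "R (xs!(n-1)) (xs!0)" "i < n"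
    show "R (xs!i) (xs!(Suc i mod n))"
    proof (cases "Suc i < n")
      case True then show ?thesis using a by simp
    next
      case False then have "Suc i = n" using a(3) by auto
      then have "i = n - 1" "Suc i mod n = 0" by auto
      then show ?thesis using a by simp
    qed
  qed
  moreover have "last xs = xs!(n-1)" "hd xs = xs!0" using False n_def
    by (auto simp: last_conv_nth hd_conv_nth)
  ultimately show ?thesis using False unfolding n_def successively_conv_nth by auto
qed

lemma Suc_mod_less: "i < n \<Longrightarrow> Suc i mod n < (n::nat)"
  by simp

lemma ex_Suc_mod_eq:
  assumes "i < n"
  shows "\<exists>j<n. Suc j mod n = i"
proof (cases i)
  case 0
  then show ?thesis using assms by (intro exI[of _ "n - 1"]) auto
next
  case (Suc k)
  then show ?thesis using assms by (intro exI[of _ k]) auto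
qed

lemma sum_Suc_mod: "(\<Sum>i<n. g (Suc i mod n)) = (\<Sum>i<n. (g i :: 'a::comm_monoid_add))"
proof (cases n)
  case (Suc m)
  have "(\<Sum>i<Suc m. g (Suc i mod Suc m)) = (\<Sum>i<m. g (Suc i)) + g 0"
    by (simp add: sum.lessThan_Suc)
  also have "\<dots> = (\<Sum>i<Suc m. g i)"
    by (simp only: sum.lessThan_Suc_shift add.commute)
  finally show ?thesis using Suc by simp
qed simp

lemma successively_filter_links:
  assumes "successively (\<lambda>p q. \<beta> p = \<alpha> q) xs" "\<forall>x\<in>set xs. \<not> Q x \<longrightarrow> \<alpha> x = \<beta> x" "xs \<noteq> []"
  shows "successively (\<lambda>p q. \<beta> p = \<alpha> q) (filter Q xs) \<and>
    (filter Q xs \<noteq> [] \<longrightarrow> \<alpha> (hd (filter Q xs)) = \<alpha> (hd xs) \<and> \<beta> (last (filter Q xs)) = \<beta> (last xs)) \<and>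
    (filter Q xs = [] \<longrightarrow> \<alpha> (hd xs) = \<beta> (last xs))"
  using assms
proof (induction xs)
  case Nil then show ?case by simp
next
  case (Cons x xs)
  show ?case
  proof (cases "xs = []")
    case True then show ?thesis using Cons.prems by auto
  next
    case False
    have sx: "successively (\<lambda>p q. \<beta> p = \<alpha> q) xs" "\<beta> x = \<alpha> (hd xs)"
      using Cons.prems(1) False by (auto simp: successively_Cons)
    note IH = Cons.IH[OF sx(1) _ False]
    have IH': "successively (\<lambda>p q. \<beta> p = \<alpha> q) (filter Q xs) \<and>
    (filter Q xs \<noteq> [] \<longrightarrow> \<alpha> (hd (filter Q xs)) = \<alpha> (hd xs) \<and> \<beta> (last (filter Q xs)) = \<beta> (last xs)) \<and>
    (filter Q xs = [] \<longrightarrow> \<alpha> (hd xs) = \<beta> (last xs))" using IH Cons.prems(2) by simp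
    show ?thesis
    proof (cases "Q x")
      case True
      then show ?thesis using IH' sx False by (cases "filter Q xs") (auto simp: successively_Cons)
    next
      case False
      then have "\<alpha> x = \<beta> x" using Cons.prems(2) by simp
      then show ?thesis using IH' sx False \<open>xs \<noteq> []\<close> by auto
    qed
  qed
qed

lemma cyclic_links_filter:
  assumes "\<forall>i<length xs. \<beta> (xs!i) = \<alpha> (xs!(Suc i mod length xs))"
    and "\<forall>x\<in>set xs. \<not> Q x \<longrightarrow> \<alpha> x = \<beta> x"
  shows "\<forall>i<length (filter Q xs). \<beta> (filter Q xs!i) = \<alpha> (filter Q xs!(Suc i mod length (filter Q xs)))"
proof (cases "xs = []")
  case False
  have chain: "successively (\<lambda>p q. \<beta> p = \<alpha> q) xs" "\<beta> (last xs) = \<alpha> (hd xs)"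
    using assms(1) False unfolding cyclic_iff_successively[where R="\<lambda>p q. \<beta> p = \<alpha> q"] by auto
  note filtered = successively_filter_links[OF chain(1) assms(2) False]
  show ?thesis
    unfolding cyclic_iff_successively[where R="\<lambda>p q. \<beta> p = \<alpha> q"] using filtered chain(2) by auto
qed simp

section \<open>Cycle spaces and closed walks of edge traversals\<close>

lemma head_ofD:
  assumes "card e = 2" "D e \<in> e"
  shows "head_of D e \<in> e" "head_of D e \<noteq> D e" "e = {D e, head_of D e}"
proof -
  obtain x y where e: "e = {x, y}" "x \<noteq> y" using assms(1) card_2_iff by metis
  have "\<exists>!h. h \<in> e \<and> h \<noteq> D e" using e assms(2) by auto
  then have "head_of D e \<in> e \<and> head_of D e \<noteq> D e"
    unfolding head_of_def by (rule theI')
  then show "head_of D e \<in> e" "head_of D e \<noteq> D e" by auto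
  then show "e = {D e, head_of D e}" using e assms(2) by auto
qed

definition trav_sign :: "('h set \<Rightarrow> 'h) \<Rightarrow> 'h set \<Rightarrow> 'h \<times> 'h \<Rightarrow> int" where
  "trav_sign D e = (\<lambda>(a, b). if {a, b} = e then (if a = D e then 1 else -1) else 0)"

lemma sigma_trav_eq: "e \<in> gedges G \<Longrightarrow> sigma_trav G D ts e = sum_list (map (trav_sign D e) ts)"
  unfolding sigma_trav_def trav_sign_def by simp

lemma sigma_trav_Nil: "sigma_trav G D [] = 0"
  unfolding sigma_trav_def by (simp add: fun_eq_iff)

lemma sigma_trav_nonzeroD:
  assumes "sigma_trav G D ts e \<noteq> 0"
  shows "e \<in> gedges G" "\<exists>(a, b)\<in>set ts. {a, b} = e"
proof -
  show e: "e \<in> gedges G" using assms unfolding sigma_trav_def by (auto split: if_splits)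
  have "map (trav_sign D e) ts \<noteq> map (\<lambda>_. 0) ts"
    using assms unfolding sigma_trav_eq[OF e] by (metis map_replicate_const sum_list_replicate mult_zero_right)
  then show "\<exists>(a, b)\<in>set ts. {a, b} = e" unfolding trav_sign_def by (force split: if_splits)
qed

lemma inc_mat_trav_sign:
  assumes "card {a, b} = 2" "D {a, b} \<in> {a, b}"
  shows "inc_mat G D v {a, b} * of_int (trav_sign D {a, b} (a, b)) =
    (if ginc G a = v then 1 else 0) - (if ginc G b = v then 1 else 0)"
proof -
  have ab: "a \<noteq> b" using assms(1) by auto
  note h = head_ofD[of "{a,b}" D, OF assms]
  show ?thesis
  proof (cases "a = D {a, b}")
    case True
    then have "head_of D {a,b} = b" using h ab by auto
    then show ?thesis using True unfolding inc_mat_def trav_sign_def by auto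
  next
    case False
    then have "D {a,b} = b" "head_of D {a,b} = a" using h ab assms(2) by auto
    then show ?thesis using False unfolding inc_mat_def trav_sign_def by auto
  qed
qed

lemma sum_inc_mat_trav_sign:
  assumes fin: "finite (gedges G)" and ab: "{a, b} \<in> gedges G"
    and two: "card {a, b} = 2" and D: "orientation G D"
  shows "(\<Sum>e\<in>gedges G. inc_mat G D v e * of_int (trav_sign D e (a, b))) =
    (if ginc G a = v then 1 else 0) - (if ginc G b = v then 1 else 0)"
proof -
  have "(\<Sum>e\<in>gedges G. inc_mat G D v e * of_int (trav_sign D e (a, b)))
      = (\<Sum>e\<in>gedges G. if {a, b} = e then inc_mat G D v {a, b} * of_int (trav_sign D {a, b} (a, b)) else 0)"
    by (rule sum.cong) (auto simp: trav_sign_def)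
  also have "\<dots> = inc_mat G D v {a, b} * of_int (trav_sign D {a, b} (a, b))"
    using ab fin by (simp add: sum.delta)
  also have "\<dots> = (if ginc G a = v then 1 else 0) - (if ginc G b = v then 1 else 0)"
    using two D ab unfolding orientation_def by (intro inc_mat_trav_sign) auto
  finally show ?thesis .
qed

lemma sigma_trav_in_cycle_space:
  assumes ts: "trav_closed_walk G ts" and D: "orientation G D"
    and two: "\<forall>e\<in>gedges G. card e = 2"
  shows "rat_vec (sigma_trav G D ts) \<in> cycle_space G D"
  unfolding cycle_space_def
proof (intro CollectI conjI allI impI ballI)
  fix e assume "e \<notin> gedges G"
  then show "rat_vec (sigma_trav G D ts) e = 0" by (simp add: rat_vec_def sigma_trav_def)
next
  fix v
  define n where "n = length ts"
  define out where "out i = (if ginc G (fst (ts!i)) = v then 1 else (0::rat))" for i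
  show "(\<Sum>e\<in>gedges G. inc_mat G D v e * rat_vec (sigma_trav G D ts) e) = 0"
  proof (cases "finite (gedges G)")
    case fin: True
    have edge: "{fst (ts!i), snd (ts!i)} \<in> gedges G" if "i < n" for i
      using ts that nth_mem unfolding trav_closed_walk_def n_def by fastforce
    have "(\<Sum>e\<in>gedges G. inc_mat G D v e * rat_vec (sigma_trav G D ts) e)
        = (\<Sum>e\<in>gedges G. \<Sum>i<n. inc_mat G D v e * of_int (trav_sign D e (ts!i)))"
      by (rule sum.cong) (auto simp: rat_vec_def sigma_trav_eq sum_list_sum_nth atLeast0LessThan
          n_def of_int_sum sum_distrib_left)
    also have "\<dots> = (\<Sum>i<n. \<Sum>e\<in>gedges G. inc_mat G D v e * of_int (trav_sign D e (ts!i)))"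
      by (rule sum.swap)
    also have "\<dots> = (\<Sum>i<n. out i - out (Suc i mod n))"
    proof (rule sum.cong[OF refl])
      fix i assume "i \<in> {..<n}"
      then have i: "i < n" by simp
      have "ginc G (snd (ts!i)) = ginc G (fst (ts!(Suc i mod n)))"
        using ts i unfolding trav_closed_walk_def n_def by blast
      then show "(\<Sum>e\<in>gedges G. inc_mat G D v e * of_int (trav_sign D e (ts!i))) = out i - out (Suc i mod n)"
        using sum_inc_mat_trav_sign[OF fin edge[OF i] _ D, of v] two edge[OF i]
        unfolding out_def by (cases "ts!i") simp
    qed
    also have "\<dots> = 0"
      by (simp add: sum_subtractf sum_Suc_mod)
    finally show ?thesis .
  qed simp
qed

definition nonbacktracking :: "('v, 'h) graph \<Rightarrow> ('h \<times> 'h) list \<Rightarrow> bool" where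
  "nonbacktracking G ts \<longleftrightarrow> trav_closed_walk G ts \<and>
     (\<forall>i<length ts. snd (ts!i) \<noteq> fst (ts!(Suc i mod length ts)))"

text \<open>Weaker than \<open>wf_graph\<close>: a half-edge need not lie on an edge. The touch-graph is
  only shown to satisfy this.\<close>
definition wf_pregraph :: "('v, 'h) graph \<Rightarrow> bool" where
  "wf_pregraph G \<longleftrightarrow> finite (gverts G) \<and> finite (gedges G)
     \<and> (\<forall>e\<in>gedges G. card e = 2 \<and> e \<subseteq> ghalfs G)
     \<and> ginc G ` ghalfs G \<subseteq> gverts G
     \<and> (\<forall>h e e'. e \<in> gedges G \<longrightarrow> e' \<in> gedges G \<longrightarrow> h \<in> e \<longrightarrow> h \<in> e' \<longrightarrow> e = e')"

lemma wf_pregraphD: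
  assumes "wf_pregraph G"
  shows "finite (gverts G)" "finite (gedges G)"
    and "e \<in> gedges G \<Longrightarrow> card e = 2" "e \<in> gedges G \<Longrightarrow> e \<subseteq> ghalfs G"
    and "h \<in> ghalfs G \<Longrightarrow> ginc G h \<in> gverts G"
    and "e \<in> gedges G \<Longrightarrow> e' \<in> gedges G \<Longrightarrow> h \<in> e \<Longrightarrow> h \<in> e' \<Longrightarrow> e = e'"
  using assms unfolding wf_pregraph_def by (simp_all add: image_subset_iff)

lemma wf_pregraph_edge_distinct: "wf_pregraph G \<Longrightarrow> {a, b} \<in> gedges G \<Longrightarrow> a \<noteq> b"
  using wf_pregraphD(3) by fastforce

lemma cycle_space_diff_scale:
  assumes "x \<in> cycle_space G D" "y \<in> cycle_space G D"
  shows "(\<lambda>e. x e - c * y e) \<in> cycle_space G D"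
proof -
  have "(\<Sum>e\<in>gedges G. inc_mat G D v e * (x e - c * y e)) =
     (\<Sum>e\<in>gedges G. inc_mat G D v e * x e) - c * (\<Sum>e\<in>gedges G. inc_mat G D v e * y e)" for v
    by (simp add: sum_subtractf sum_distrib_left algebra_simps)
  then show ?thesis using assms unfolding cycle_space_def by auto
qed

text \<open>Flow conservation at the vertex of \<open>b\<close>: a support edge entering it is
  balanced by another support edge.\<close>
lemma cycle_space_support_continues:
  assumes G: "wf_pregraph G" and D: "orientation G D" and x: "x \<in> cycle_space G D"
    and loopfree: "\<forall>e\<in>gedges G. x e \<noteq> 0 \<longrightarrow> (\<forall>a b. e = {a,b} \<longrightarrow> ginc G a \<noteq> ginc G b)"
    and ab: "{a, b} \<in> gedges G" "x {a, b} \<noteq> 0"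
  obtains a' b' where "{a', b'} \<in> gedges G" "x {a', b'} \<noteq> 0" "{a', b'} \<noteq> {a, b}"
    "ginc G a' = ginc G b"
proof -
  define v where "v = ginc G b"
  have fin: "finite (gedges G)" using wf_pregraphD(2)[OF G] .
  have two: "card {a,b} = 2" using wf_pregraphD(3)[OF G ab(1)] .
  have "b \<in> ghalfs G" using wf_pregraphD(4)[OF G ab(1)] by simp
  then have vV: "v \<in> gverts G" unfolding v_def by (rule wf_pregraphD(5)[OF G])
  have "ginc G a \<noteq> v" using loopfree ab unfolding v_def by blast
  moreover have "D {a,b} \<in> {a,b}" using D ab unfolding orientation_def by blast
  ultimately have "inc_mat G D v {a,b} * of_int (trav_sign D {a,b} (a,b)) = -1"
    using inc_mat_trav_sign[OF two, of D G v] unfolding v_def by simp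
  then have inc: "inc_mat G D v {a,b} \<noteq> 0" by auto
  have "(\<Sum>e\<in>gedges G. inc_mat G D v e * x e) = 0" using x vV unfolding cycle_space_def by blast
  then have "inc_mat G D v {a,b} * x {a,b} + (\<Sum>e\<in>gedges G - {{a,b}}. inc_mat G D v e * x e) = 0"
    using fin ab by (simp add: sum.remove)
  then have "(\<Sum>e\<in>gedges G - {{a,b}}. inc_mat G D v e * x e) \<noteq> 0" using inc ab by auto
  then obtain e where "e \<in> gedges G - {{a,b}}" "inc_mat G D v e * x e \<noteq> 0"
    by (meson sum.neutral)
  then have e: "e \<in> gedges G" "e \<noteq> {a,b}" "inc_mat G D v e \<noteq> 0" "x e \<noteq> 0" by auto
  have "card e = 2" "D e \<in> e" using wf_pregraphD(3)[OF G e(1)] D e(1) unfolding orientation_def by auto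
  note he = head_ofD[of e D, OF this]
  have "v = ginc G (D e) \<or> v = ginc G (head_of D e)"
    using e(3) unfolding inc_mat_def by (auto split: if_splits)
  then show thesis
  proof
    assume "v = ginc G (D e)"
    then show thesis using that[of "D e" "head_of D e"] e he(3)[symmetric] v_def by simp
  next
    assume "v = ginc G (head_of D e)"
    moreover have "{head_of D e, D e} = e" using he(3) by auto
    ultimately show thesis using that[of "head_of D e" "D e"] e v_def by simp
  qed
qed

lemma first_repetition:
  fixes u :: "nat \<Rightarrow> 'a"
  assumes "finite A" "\<And>m. u m \<in> A"
  obtains p q where "p < q" "u p = u q" "\<And>m m'. m < m' \<Longrightarrow> m' < q \<Longrightarrow> u m \<noteq> u m'"
proof -
  have "\<not> inj_on u {..card A}"
  proof
    assume "inj_on u {..card A}"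
    then have "card (u ` {..card A}) = Suc (card A)" by (simp add: card_image)
    moreover have "card (u ` {..card A}) \<le> card A" using assms by (intro card_mono) auto
    ultimately show False by simp
  qed
  then have "\<exists>q p. p < q \<and> u p = u q" unfolding inj_on_def by (metis linorder_neqE_nat)
  define q where "q = (LEAST q. \<exists>p<q. u p = u q)"
  have "\<exists>p<q. u p = u q" unfolding q_def using \<open>\<exists>q p. p < q \<and> u p = u q\<close> by (rule LeastI_ex)
  moreover have "u m \<noteq> u m'" if "m < m'" "m' < q" for m m'
    using that not_less_Least[of m' "\<lambda>q. \<exists>p<q. u p = u q"] unfolding q_def by blast
  ultimately show thesis using that by blast
qed

text \<open>A sequence of edge traversals \<open>T\<close> that never immediately reuses an edge, from its
  first return to a vertex: the traversals between the two visits form a nonbacktracking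
  closed walk passing exactly once through the edge of \<open>T p\<close>.\<close>
context
  fixes G :: "('v, 'h) graph" and T :: "nat \<Rightarrow> 'h \<times> 'h" and p q :: nat
  assumes G: "wf_pregraph G"
    and edge: "\<And>m. {fst (T m), snd (T m)} \<in> gedges G"
    and turn: "\<And>m. {fst (T (Suc m)), snd (T (Suc m))} \<noteq> {fst (T m), snd (T m)}"
    and link: "\<And>m. ginc G (fst (T (Suc m))) = ginc G (snd (T m))"
    and return: "p < q" "ginc G (fst (T p)) = ginc G (fst (T q))"
    and first: "\<And>m m'. m < m' \<Longrightarrow> m' < q \<Longrightarrow> ginc G (fst (T m)) \<noteq> ginc G (fst (T m'))"
begin

lemma first_return_edge_once:
  assumes m: "p < m" "m < q"
  shows "{fst (T m), snd (T m)} \<noteq> {fst (T p), snd (T p)}"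
proof
  assume eq: "{fst (T m), snd (T m)} = {fst (T p), snd (T p)}"
  then have "fst (T m) = fst (T p) \<or> fst (T m) = snd (T p)" by auto
  then show False
  proof
    assume "fst (T m) = fst (T p)"
    then show False using first[of p m] m by simp
  next
    assume "fst (T m) = snd (T p)"
    then have um: "ginc G (fst (T m)) = ginc G (fst (T (Suc p)))" using link[of p] by simp
    show False
    proof (cases "m = Suc p")
      case True then show False using eq turn[of p] by simp
    next
      case False then show False using first[of "Suc p" m] m um by simp
    qed
  qed
qed

lemma first_return_edges_differ:
  assumes "{fst (T m), snd (T m)} \<noteq> {fst (T m'), snd (T m')}"
  shows "snd (T m) \<noteq> fst (T m')"
proof
  assume "snd (T m) = fst (T m')"
  then show False
    using wf_pregraphD(6)[OF G edge[of m] edge[of m'], of "snd (T m)"] assms by simp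
qed

lemma first_return_nonbacktracking: "nonbacktracking G (map T [p..<q])"
  unfolding nonbacktracking_def trav_closed_walk_def
proof (intro conjI ballI allI impI)
  fix ab assume "ab \<in> set (map T [p..<q])"
  then obtain m where "ab = T m" by auto
  then show "case ab of (a, b) \<Rightarrow> {a, b} \<in> gedges G" using edge[of m] by (simp add: case_prod_beta)
next
  fix i assume "i < length (map T [p..<q])"
  then have i: "p + i < q" by simp
  show "ginc G (snd (map T [p..<q] ! i)) = ginc G (fst (map T [p..<q] ! (Suc i mod length (map T [p..<q]))))"
  proof (cases "Suc (p + i) < q")
    case True
    then show ?thesis using link[of "p + i"] by simp
  next
    case False
    then have "Suc (p + i) = q" "Suc i = q - p" using i by auto
    then show ?thesis using link[of "p + i"] return by simp
  qed
  show "snd (map T [p..<q] ! i) \<noteq> fst (map T [p..<q] ! (Suc i mod length (map T [p..<q])))"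
  proof (cases "Suc (p + i) < q")
    case True
    then show ?thesis using first_return_edges_differ[OF turn[of "p + i", symmetric]] by simp
  next
    case False
    then have last: "Suc (p + i) = q" "Suc i = q - p" using i by auto
    show ?thesis
    proof (cases "i = 0")
      case True
      have "fst (T p) \<noteq> snd (T p)" by (rule wf_pregraph_edge_distinct[OF G edge])
      then show ?thesis using True last by simp
    next
      case False
      then show ?thesis using last first_return_edges_differ[OF first_return_edge_once[of "p + i"]] i
        by simp
    qed
  qed
qed

lemma first_return_sigma_nonzero: "sigma_trav G D (map T [p..<q]) {fst (T p), snd (T p)} \<noteq> 0"
proof -
  define e where "e = {fst (T p), snd (T p)}"
  have "sigma_trav G D (map T [p..<q]) e = (\<Sum>m\<in>{p..<q}. trav_sign D e (T m))"
    unfolding sigma_trav_eq[OF edge[of p, folded e_def]]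
    by (simp add: sum_set_upt_conv_sum_list_nat[symmetric] comp_def)
  also have "\<dots> = trav_sign D e (T p) + (\<Sum>m\<in>{Suc p..<q}. trav_sign D e (T m))"
    using return by (simp add: atLeastLessThanSuc_atLeastAtMost[symmetric] sum.atLeast_Suc_lessThan)
  also have "(\<Sum>m\<in>{Suc p..<q}. trav_sign D e (T m)) = 0"
  proof (intro sum.neutral ballI)
    fix m assume "m \<in> {Suc p..<q}"
    then have "{fst (T m), snd (T m)} \<noteq> e" using first_return_edge_once unfolding e_def by simp
    then show "trav_sign D e (T m) = 0" unfolding trav_sign_def by (cases "T m") simp
  qed
  finally show ?thesis unfolding e_def trav_sign_def by (cases "T p") simp
qed

end

lemma cycle_space_support_walk:
  assumes G: "wf_pregraph G" and D: "orientation G D" and x: "x \<in> cycle_space G D"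
    and loopfree: "\<forall>e\<in>gedges G. x e \<noteq> 0 \<longrightarrow> (\<forall>a b. e = {a,b} \<longrightarrow> ginc G a \<noteq> ginc G b)"
    and e0: "e0 \<in> gedges G" "x e0 \<noteq> 0"
  obtains T where
    "\<And>m. {fst (T m), snd (T m)} \<in> gedges G" "\<And>m. x {fst (T m), snd (T m)} \<noteq> 0"
    "\<And>m. {fst (T (Suc m)), snd (T (Suc m))} \<noteq> {fst (T m), snd (T m)}"
    "\<And>m. ginc G (fst (T (Suc m))) = ginc G (snd (T m))"
proof -
  define good where "good r \<longleftrightarrow> {fst r, snd r} \<in> gedges G \<and> x {fst r, snd r} \<noteq> 0" for r
  define next_trav where "next_trav r =
    (SOME r'. good r' \<and> {fst r', snd r'} \<noteq> {fst r, snd r} \<and> ginc G (fst r') = ginc G (snd r))" for r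
  have next_trav: "good (next_trav r) \<and> {fst (next_trav r), snd (next_trav r)} \<noteq> {fst r, snd r}
      \<and> ginc G (fst (next_trav r)) = ginc G (snd r)" if "good r" for r
  proof -
    from that have "{fst r, snd r} \<in> gedges G" "x {fst r, snd r} \<noteq> 0" unfolding good_def by auto
    then obtain a' b' where "{a', b'} \<in> gedges G" "x {a', b'} \<noteq> 0" "{a', b'} \<noteq> {fst r, snd r}"
      "ginc G a' = ginc G (snd r)"
      by (rule cycle_space_support_continues[OF G D x loopfree])
    then have "\<exists>r'. good r' \<and> {fst r', snd r'} \<noteq> {fst r, snd r} \<and> ginc G (fst r') = ginc G (snd r)"
      unfolding good_def by (intro exI[of _ "(a', b')"]) simp
    then show ?thesis unfolding next_trav_def by (rule someI_ex)
  qed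
  have "card e0 = 2" using wf_pregraphD(3)[OF G e0(1)] .
  then obtain a0 b0 where ab0: "e0 = {a0, b0}" by (meson card_2_iff)
  define T where "T m = (next_trav ^^ m) (a0, b0)" for m
  have T_Suc: "T (Suc m) = next_trav (T m)" for m unfolding T_def by simp
  have good: "good (T m)" for m
  proof (induction m)
    case 0
    show ?case using e0 ab0 by (simp add: T_def good_def)
  next
    case (Suc m)
    then show ?case using next_trav[of "T m"] by (simp add: T_Suc)
  qed
  show thesis
  proof (rule that)
    show "{fst (T m), snd (T m)} \<in> gedges G" "x {fst (T m), snd (T m)} \<noteq> 0" for m
      using good[of m] unfolding good_def by blast+
    show "{fst (T (Suc m)), snd (T (Suc m))} \<noteq> {fst (T m), snd (T m)}" for m
      using next_trav[OF good[of m]] by (simp add: T_Suc)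
    show "ginc G (fst (T (Suc m))) = ginc G (snd (T m))" for m
      using next_trav[OF good[of m]] by (simp add: T_Suc)
  qed
qed

lemma cycle_space_loopfree_support_cycle:
  assumes G: "wf_pregraph G" and D: "orientation G D" and x: "x \<in> cycle_space G D"
    and loopfree: "\<forall>e\<in>gedges G. x e \<noteq> 0 \<longrightarrow> (\<forall>a b. e = {a,b} \<longrightarrow> ginc G a \<noteq> ginc G b)"
    and e0: "e0 \<in> gedges G" "x e0 \<noteq> 0"
  obtains ts e1 where "nonbacktracking G ts" "e1 \<in> gedges G" "sigma_trav G D ts e1 \<noteq> 0"
    "\<And>e. sigma_trav G D ts e \<noteq> 0 \<Longrightarrow> x e \<noteq> 0"
proof -
  obtain T where edge: "\<And>m. {fst (T m), snd (T m)} \<in> gedges G"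
    and support: "\<And>m. x {fst (T m), snd (T m)} \<noteq> 0"
    and turn: "\<And>m. {fst (T (Suc m)), snd (T (Suc m))} \<noteq> {fst (T m), snd (T m)}"
    and link: "\<And>m. ginc G (fst (T (Suc m))) = ginc G (snd (T m))"
    using cycle_space_support_walk[OF G D x loopfree e0] by blast
  have fin: "finite (gverts G)" using wf_pregraphD(1)[OF G] .
  have vert: "ginc G (fst (T m)) \<in> gverts G" for m
  proof -
    have "fst (T m) \<in> ghalfs G" using wf_pregraphD(4)[OF G edge[of m]] by simp
    then show ?thesis by (rule wf_pregraphD(5)[OF G])
  qed
  obtain p q where pq: "p < q" "ginc G (fst (T p)) = ginc G (fst (T q))"
    "\<And>m m'. m < m' \<Longrightarrow> m' < q \<Longrightarrow> ginc G (fst (T m)) \<noteq> ginc G (fst (T m'))"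
    using first_repetition[of _ "\<lambda>m. ginc G (fst (T m))", OF fin vert] by blast
  have in_support: "x e \<noteq> 0" if nz: "sigma_trav G D (map T [p..<q]) e \<noteq> 0" for e
  proof -
    obtain a b where "(a, b) \<in> set (map T [p..<q])" "{a, b} = e"
      using sigma_trav_nonzeroD(2)[OF nz] by blast
    then obtain m where "T m = (a, b)" by auto
    then show ?thesis using support[of m] \<open>{a, b} = e\<close> by simp
  qed
  show thesis
  proof (rule that)
    show "nonbacktracking G (map T [p..<q])"
      by (rule first_return_nonbacktracking[OF G edge turn link pq])
    show "sigma_trav G D (map T [p..<q]) {fst (T p), snd (T p)} \<noteq> 0"
      by (rule first_return_sigma_nonzero[OF G edge turn link pq])
  qed (use edge in_support in auto)
qed

lemma cycle_space_support_cycle: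
  assumes G: "wf_pregraph G" and D: "orientation G D" and x: "x \<in> cycle_space G D"
    and nz: "x \<noteq> (\<lambda>e. 0)"
  obtains ts e1 where "nonbacktracking G ts" "e1 \<in> gedges G" "sigma_trav G D ts e1 \<noteq> 0"
    "\<And>e. sigma_trav G D ts e \<noteq> 0 \<Longrightarrow> x e \<noteq> 0"
proof (cases "\<forall>e\<in>gedges G. x e \<noteq> 0 \<longrightarrow> (\<forall>a b. e = {a,b} \<longrightarrow> ginc G a \<noteq> ginc G b)")
  case True
  obtain e0 where "x e0 \<noteq> 0" using nz by blast
  moreover have "e0 \<in> gedges G" using x calculation unfolding cycle_space_def by blast
  ultimately show thesis using cycle_space_loopfree_support_cycle[OF G D x True] that by blast
next
  case False
  then obtain a b where ab: "{a,b} \<in> gedges G" "x {a,b} \<noteq> 0" "ginc G a = ginc G b" by blast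
  have "a \<noteq> b" by (rule wf_pregraph_edge_distinct[OF G ab(1)])
  then have "nonbacktracking G [(a, b)]"
    unfolding nonbacktracking_def trav_closed_walk_def using ab by auto
  moreover have "sigma_trav G D [(a, b)] {a,b} \<noteq> 0" unfolding sigma_trav_def using ab by simp
  moreover have "x e \<noteq> 0" if "sigma_trav G D [(a, b)] e \<noteq> 0" for e
    using sigma_trav_nonzeroD(2)[OF that] ab by auto
  ultimately show thesis using that ab(1) by blast
qed

text \<open>Peeling off closed walks: subtracting a multiple of the walk found in the support
  of \<open>x\<close> kills one more edge of the support.\<close>
lemma cycle_space_subset_span_nonbacktracking:
  assumes G: "wf_pregraph G" and D: "orientation G D"
  shows "cycle_space G D \<subseteq> fun_module.span {rat_vec (sigma_trav G D ts) | ts. nonbacktracking G ts}"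
proof
  fix x assume "x \<in> cycle_space G D"
  then show "x \<in> fun_module.span {rat_vec (sigma_trav G D ts) | ts. nonbacktracking G ts}"
  proof (induction "card {e\<in>gedges G. x e \<noteq> 0}" arbitrary: x rule: less_induct)
    case less
    let ?S = "{rat_vec (sigma_trav G D ts) | ts. nonbacktracking G ts}"
    show ?case
    proof (cases "x = (\<lambda>e. 0)")
      case True then show ?thesis using fun_module.span_zero by (simp add: zero_fun_def)
    next
      case False
      obtain ts e1 where ts: "nonbacktracking G ts" "e1 \<in> gedges G" "sigma_trav G D ts e1 \<noteq> 0"
        "\<And>e. sigma_trav G D ts e \<noteq> 0 \<Longrightarrow> x e \<noteq> 0"
        using cycle_space_support_cycle[OF G D less.prems False] by blast
      define y where "y = rat_vec (sigma_trav G D ts)"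
      have y: "y \<in> cycle_space G D" unfolding y_def
        using G ts(1) D sigma_trav_in_cycle_space
        unfolding nonbacktracking_def by (blast dest: wf_pregraphD(3))
      have ye1: "y e1 \<noteq> 0" using ts(3) unfolding y_def rat_vec_def by simp
      define x' where "x' = (\<lambda>e. x e - x e1 / y e1 * y e)"
      have x': "x' \<in> cycle_space G D"
        unfolding x'_def by (rule cycle_space_diff_scale[OF less.prems y])
      have sub: "{e\<in>gedges G. x' e \<noteq> 0} \<subseteq> {e\<in>gedges G. x e \<noteq> 0} - {e1}"
        using ye1 ts(4) unfolding x'_def y_def rat_vec_def by auto
      have fin: "finite {e\<in>gedges G. x e \<noteq> 0}" using wf_pregraphD(2)[OF G] by simp
      have "e1 \<in> {e\<in>gedges G. x e \<noteq> 0}" using ts(2-4) by blast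
      then have "card ({e\<in>gedges G. x e \<noteq> 0} - {e1}) < card {e\<in>gedges G. x e \<noteq> 0}"
        by (rule card_Diff1_less[OF fin])
      then have "card {e\<in>gedges G. x' e \<noteq> 0} < card {e\<in>gedges G. x e \<noteq> 0}"
        using card_mono[OF _ sub] fin by (meson finite_Diff le_less_trans)
      then have "x' \<in> fun_module.span ?S" using less.hyps x' by blast
      moreover have "y \<in> fun_module.span ?S" unfolding y_def using ts(1) by (intro fun_module.span_base) blast
      ultimately have "x' + scale_fun (x e1 / y e1) y \<in> fun_module.span ?S"
        by (intro fun_module.span_add fun_module.span_scale)
      moreover have "x = x' + scale_fun (x e1 / y e1) y"
        unfolding x'_def scale_fun_def by (simp add: fun_eq_iff)
      ultimately show ?thesis by simp
    qed
  qed
qed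

lemma cycle_spanning_setI:
  assumes walks: "\<forall>W\<in>\<Gamma>. cw W"
    and cycles: "\<And>D. orientation G D \<Longrightarrow> (\<lambda>W. rat_vec (sig D W)) ` \<Gamma> \<subseteq> cycle_space G D"
    and spans: "\<And>D. orientation G D \<Longrightarrow>
      cycle_space G D \<subseteq> fun_module.span ((\<lambda>W. rat_vec (sig D W)) ` \<Gamma>)"
  shows "cycle_spanning_set G cw sig \<Gamma>"
  unfolding cycle_spanning_set_def
proof (intro conjI allI impI walks)
  fix D assume D: "orientation G D"
  define rv where "rv W = rat_vec (sig D W)" for W
  obtain B where B: "B \<subseteq> rv ` \<Gamma>" "fun_module.independent B" "rv ` \<Gamma> \<subseteq> fun_module.span B"
    by (rule fun_vector.maximal_independent_subset)
  then obtain Bw where Bw: "Bw \<subseteq> \<Gamma>" "inj_on rv Bw" "B = rv ` Bw"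
    by (auto simp: subset_image_inj)
  have "inj_on (sig D) Bw"
    using Bw(2) unfolding rv_def by (intro inj_on_imageI2[of rat_vec]) (simp add: comp_def)
  moreover have "cycle_space G D \<subseteq> fun_module.span B"
    using spans[OF D] fun_module.span_minimal[OF B(3)] unfolding rv_def by auto
  then have "is_basis_of_cycle_space G D (rv ` Bw)"
    unfolding is_basis_of_cycle_space_def rat_lin_indep_iff_independent rat_span_eq_span
    using B Bw cycles[OF D] unfolding rv_def by blast
  ultimately show "\<exists>B\<subseteq>\<Gamma>. inj_on (sig D) B \<and> is_basis_of_cycle_space G D ((\<lambda>W. rat_vec (sig D W)) ` B)"
    using Bw(1) unfolding rv_def by blast
qed

lemma cycle_spanning_set_spans:
  assumes "cycle_spanning_set G cw sig \<Gamma>" "orientation G D"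
  shows "cycle_space G D \<subseteq> fun_module.span ((\<lambda>W. rat_vec (sig D W)) ` \<Gamma>)"
proof -
  obtain B where "B \<subseteq> \<Gamma>" "is_basis_of_cycle_space G D ((\<lambda>W. rat_vec (sig D W)) ` B)"
    using assms unfolding cycle_spanning_set_def by blast
  then show ?thesis
    unfolding is_basis_of_cycle_space_def rat_span_eq_span
    using fun_module.span_mono[OF image_mono] by blast
qed

lemma closed_walk_nth:
  assumes "closed_walk G w" "i < length w"
  shows "fst (w!i) \<in> ghalfs G" "snd (w!i) \<in> ghalfs G" "fst (w!i) \<noteq> snd (w!i)"
    "ginc G (fst (w!i)) = ginc G (snd (w!i))"
    "{snd (w!i), fst (w!(Suc i mod length w))} \<in> gedges G"
proof -
  have "w!i \<in> set w" using assms(2) by simp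
  then show "fst (w!i) \<in> ghalfs G" "snd (w!i) \<in> ghalfs G" "fst (w!i) \<noteq> snd (w!i)"
    "ginc G (fst (w!i)) = ginc G (snd (w!i))"
    using assms(1) unfolding closed_walk_def by (auto simp: case_prod_beta)
  show "{snd (w!i), fst (w!(Suc i mod length w))} \<in> gedges G"
    using assms unfolding closed_walk_def by blast
qed

lemma length_etrav [simp]: "length (etrav w) = length w"
  by (simp add: etrav_def)

lemma nth_etrav: "i < length w \<Longrightarrow> etrav w ! i = (snd (w!i), fst (w!(Suc i mod length w)))"
  by (simp add: etrav_def)

lemma trav_closed_walk_etrav:
  assumes "closed_walk G w"
  shows "trav_closed_walk G (etrav w)"
  unfolding trav_closed_walk_def
proof (intro conjI ballI allI impI)
  fix p assume "p \<in> set (etrav w)"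
  then obtain i where i: "i < length w" "p = etrav w ! i" by (auto simp: in_set_conv_nth)
  then show "case p of (a, b) \<Rightarrow> {a, b} \<in> gedges G"
    using closed_walk_nth(5)[OF assms i(1)] by (simp add: nth_etrav)
next
  fix i assume i: "i < length (etrav w)"
  then have "Suc i mod length w < length w" by (simp add: Suc_mod_less)
  then show "ginc G (snd (etrav w ! i)) = ginc G (fst (etrav w ! (Suc i mod length (etrav w))))"
    using i closed_walk_nth(4)[OF assms] by (simp add: nth_etrav)
qed

lemma nonbacktracking_etrav:
  assumes "closed_walk G w"
  shows "nonbacktracking G (etrav w)"
  unfolding nonbacktracking_def
proof (intro conjI allI impI trav_closed_walk_etrav[OF assms])
  fix i assume i: "i < length (etrav w)"
  then have "Suc i mod length w < length w" by (simp add: Suc_mod_less)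
  then show "snd (etrav w ! i) \<noteq> fst (etrav w ! (Suc i mod length (etrav w)))"
    using i closed_walk_nth(3)[OF assms] by (simp add: nth_etrav)
qed

lemma sigma_in_cycle_space:
  "closed_walk G w \<Longrightarrow> orientation G D \<Longrightarrow> \<forall>e\<in>gedges G. card e = 2 \<Longrightarrow>
    rat_vec (sigma G D w) \<in> cycle_space G D"
  unfolding sigma_def by (rule sigma_trav_in_cycle_space[OF trav_closed_walk_etrav])

lemma closed_walk_rotate:
  assumes w: "closed_walk G w"
  shows "closed_walk G (rotate k w)"
  unfolding closed_walk_def
proof (intro conjI allI impI)
  show "\<forall>(a, b)\<in>set (rotate k w). a \<in> ghalfs G \<and> b \<in> ghalfs G \<and> a \<noteq> b \<and> ginc G a = ginc G b"
    using w unfolding closed_walk_def by simp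
next
  fix i assume i: "i < length (rotate k w)"
  define n where "n = length w"
  define j where "j = (k + i) mod n"
  have i': "i < n" "Suc i mod n < n" using i Suc_mod_less[of i n] unfolding n_def by auto
  then have j: "j < n" unfolding j_def by simp
  have "(k + Suc i mod n) mod n = Suc j mod n" unfolding j_def by (simp add: mod_add_right_eq mod_Suc_eq)
  then have "rotate k w ! (Suc i mod n) = w ! (Suc j mod n)" "rotate k w ! i = w ! j"
    using nth_rotate[of "Suc i mod n" w k] nth_rotate[of i w k] i' unfolding j_def n_def
    by (simp_all add: add.commute)
  then show "{snd (rotate k w ! i), fst (rotate k w ! (Suc i mod length (rotate k w)))} \<in> gedges G"
    using closed_walk_nth(5)[OF w j[unfolded n_def]] unfolding n_def by simp
qed

lemma walk_halfs_Cons [simp]: "walk_halfs ((a, b) # w) = a # b # walk_halfs w"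
  by (simp add: walk_halfs_def)

lemma set_walk_halfs: "set (walk_halfs w) = fst ` set w \<union> snd ` set w"
  by (induction w) (auto simp: walk_halfs_def)

lemma distinct_walk_halfs_iff:
  "distinct (walk_halfs w) \<longleftrightarrow> distinct (map fst w) \<and> distinct (map snd w)
     \<and> fst ` set w \<inter> snd ` set w = {} \<and> (\<forall>p\<in>set w. fst p \<noteq> snd p)"
proof (induction w)
  case Nil then show ?case by (simp add: walk_halfs_def)
next
  case (Cons p w)
  then show ?case by (cases p) (auto simp: set_walk_halfs image_iff)
qed

lemma distinct_walk_halfs_rotate:
  "distinct (walk_halfs w) \<Longrightarrow> distinct (walk_halfs (rotate k w))"
  unfolding distinct_walk_halfs_iff by (simp add: rotate_map[symmetric])

lemma in_circ_class: "w \<in> circ_class w"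
  unfolding circ_class_def by (auto intro: exI[of _ 0])

lemma trans_of_circ_class: "trans_of (circ_class w) = (\<lambda>(a, b). {a, b}) ` set w"
proof -
  have "(\<exists>w'\<in>circ_class w. (a, b) \<in> set w') \<longleftrightarrow> (a, b) \<in> set w \<or> (b, a) \<in> set w" for a b
  proof
    assume "\<exists>w'\<in>circ_class w. (a, b) \<in> set w'"
    then show "(a, b) \<in> set w \<or> (b, a) \<in> set w"
      unfolding circ_class_def rev_walk_def by auto
  next
    have "rev_walk w \<in> circ_class w" unfolding circ_class_def by (auto intro: exI[of _ 0])
    moreover assume "(a, b) \<in> set w \<or> (b, a) \<in> set w"
    ultimately show "\<exists>w'\<in>circ_class w. (a, b) \<in> set w'"
      using in_circ_class unfolding rev_walk_def by force
  qed
  then show ?thesis unfolding trans_of_def by (auto simp: insert_commute image_iff)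
qed

definition walk_edge :: "('h \<times> 'h) list \<Rightarrow> nat \<Rightarrow> 'h set" where
  "walk_edge w i = {snd (w!i), fst (w!(Suc i mod length w))}"

lemma walk_edge_in_traversed:
  assumes "i < length w"
  shows "walk_edge w i \<in> traversed (circ_class w)"
proof -
  have "etrav w ! i \<in> set (etrav w)" using assms by simp
  then have "(snd (w!i), fst (w!(Suc i mod length w))) \<in> set (etrav w)" using nth_etrav[OF assms] by simp
  then show ?thesis unfolding traversed_def walk_edge_def using in_circ_class[of w] by blast
qed

lemma walk_edge_inj:
  assumes d: "distinct (walk_halfs w)" and ij: "i < length w" "j < length w"
    and eq: "walk_edge w i = walk_edge w j"
  shows "i = j"
proof -
  have dw: "distinct (map snd w)" "fst ` set w \<inter> snd ` set w = {}"
    using d unfolding distinct_walk_halfs_iff by blast+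
  have "snd (w!i) \<in> walk_edge w j" using eq unfolding walk_edge_def by auto
  then have "snd (w!i) = snd (w!j) \<or> snd (w!i) = fst (w!(Suc j mod length w))"
    unfolding walk_edge_def by auto
  moreover have "snd (w!i) \<noteq> fst (w!(Suc j mod length w))"
    using dw(2) ij Suc_mod_less[OF ij(2)] by (metis IntI empty_iff image_eqI nth_mem)
  ultimately show ?thesis using nth_eq_iff_index_eq[OF dw(1)] ij by auto
qed

lemma walk_edge_rotate:
  assumes "i < length w"
  shows "walk_edge (rotate k w) i = walk_edge w ((k + i) mod length w)"
proof -
  have "(k + Suc i mod length w) mod length w = Suc ((k + i) mod length w) mod length w"
    by (simp add: mod_add_right_eq mod_Suc_eq)
  then show ?thesis
    using assms Suc_mod_less[OF assms] unfolding walk_edge_def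
    by (simp add: nth_rotate add.commute)
qed

lemma rotate_index_ne:
  assumes "j < n" "Suc i < n"
  shows "(Suc j + i) mod n \<noteq> j"
proof (cases "Suc j + i < n")
  case False
  then have "(Suc j + i) mod n = Suc j + i - n" using assms by (simp add: le_mod_geq)
  then show ?thesis using assms False by arith
qed simp

definition linked :: "('v, 'h) graph \<Rightarrow> 'h \<times> 'h \<Rightarrow> 'h \<times> 'h \<Rightarrow> bool" where
  "linked G p q \<longleftrightarrow> {snd p, fst q} \<in> gedges G"

text \<open>The pairs \<open>(y, y)\<close> and \<open>(x, x)\<close> are not transitions; they only record that the
  walk \<open>arc\<close> is entered along the edge at \<open>y\<close> and left along the edge at \<open>x\<close>.\<close>
definition linked_path :: "('v, 'h) graph \<Rightarrow> 'h \<Rightarrow> ('h \<times> 'h) list \<Rightarrow> 'h \<Rightarrow> bool" where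
  "linked_path G y arc x \<longleftrightarrow> successively (linked G) ((y, y) # arc @ [(x, x)])"

lemma successively_map_upt:
  assumes "\<And>i. m \<le> i \<Longrightarrow> Suc i < n \<Longrightarrow> R (g i) (g (Suc i))"
  shows "successively R (map g [m..<n])"
  unfolding successively_conv_nth
proof (intro allI impI)
  fix i assume "Suc i < length (map g [m..<n])"
  then show "R (map g [m..<n] ! i) (map g [m..<n] ! Suc i)" using assms[of "m + i"] by simp
qed

lemma successively_concat:
  assumes "\<forall>i<n. seg i \<noteq> [] \<and> successively R (seg i)"
    "\<forall>i. Suc i < n \<longrightarrow> R (last (seg i)) (hd (seg (Suc i)))"
  shows "successively R (concat (map seg [0..<n])) \<and>
    (n > 0 \<longrightarrow> concat (map seg [0..<n]) \<noteq> [] \<and> hd (concat (map seg [0..<n])) = hd (seg 0)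
       \<and> last (concat (map seg [0..<n])) = last (seg (n - 1)))"
  using assms
proof (induction n)
  case (Suc n)
  have IH: "successively R (concat (map seg [0..<n])) \<and>
    (n > 0 \<longrightarrow> concat (map seg [0..<n]) \<noteq> [] \<and> hd (concat (map seg [0..<n])) = hd (seg 0)
       \<and> last (concat (map seg [0..<n])) = last (seg (n - 1)))"
    using Suc.IH Suc.prems by simp
  have sn: "seg n \<noteq> []" "successively R (seg n)" using Suc.prems(1) by auto
  show ?case
  proof (cases "n = 0")
    case False
    have "R (last (seg (n - 1))) (hd (seg n))" using Suc.prems(2) False
      by (metis Suc_diff_1 lessI not_gr_zero)
    then show ?thesis using IH sn False by (auto simp: successively_append_iff)
  qed (use sn in simp)
qed simp

lemma linked_path_segment:
  assumes "linked_path G y arc x"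
  shows "successively (linked G) ((x', y) # arc) \<and> linked G (last ((x', y) # arc)) (x, y'')"
proof (cases arc)
  case Nil then show ?thesis using assms by (simp add: linked_path_def linked_def)
next
  case (Cons a as)
  have "successively (linked G) (((y, y) # arc) @ [(x, x)])" using assms by (simp add: linked_path_def)
  then have a1: "successively (linked G) ((y, y) # a # as)" "linked G (last ((y, y) # a # as)) (x, x)"
    unfolding successively_append_iff Cons by auto
  have "linked G (y, y) a" "successively (linked G) (a # as)" using a1(1) by auto
  then have "successively (linked G) ((x', y) # a # as)" unfolding linked_def by simp
  moreover have "linked G (last ((x', y) # a # as)) (x, y'')" using a1(2) unfolding linked_def by simp
  ultimately show ?thesis unfolding Cons by (rule conjI)
qed

lemma successively_linked_halfs:
  assumes "successively (linked G) (a # xs @ [b])" "p \<in> set xs"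
  shows "(\<exists>e\<in>gedges G. fst p \<in> e) \<and> (\<exists>e\<in>gedges G. snd p \<in> e)"
  using assms
proof (induction xs arbitrary: a)
  case (Cons p' xs')
  have l1: "linked G a p'" and s': "successively (linked G) (p' # xs' @ [b])" using Cons.prems(1) by auto
  have l2: "linked G p' (hd (xs' @ [b]))" using s' by (cases xs') auto
  show ?case
  proof (cases "p = p'")
    case True then show ?thesis using l1 l2 unfolding linked_def by blast
  next
    case False then have "p \<in> set xs'" using Cons.prems(2) by simp
    then show ?thesis using Cons.IH[OF s'] by blast
  qed
qed simp

lemma linked_path_halfs:
  assumes "linked_path G y arc x"
  shows "\<exists>e\<in>gedges G. y \<in> e" "\<exists>e\<in>gedges G. x \<in> e"
    "p \<in> set arc \<Longrightarrow> (\<exists>e\<in>gedges G. fst p \<in> e) \<and> (\<exists>e\<in>gedges G. snd p \<in> e)"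
proof -
  have s: "successively (linked G) ((y, y) # arc @ [(x, x)])" using assms by (simp add: linked_path_def)
  then have "linked G (y, y) (hd (arc @ [(x, x)]))" unfolding successively_Cons by simp
  then show "\<exists>e\<in>gedges G. y \<in> e" unfolding linked_def by (intro bexI) simp_all
  have "successively (linked G) (((y, y) # arc) @ [(x, x)])" using s by simp
  then have "linked G (last ((y, y) # arc)) (x, x)" unfolding successively_append_iff by simp
  then show "\<exists>e\<in>gedges G. x \<in> e" unfolding linked_def by (intro bexI) simp_all
  show "p \<in> set arc \<Longrightarrow> (\<exists>e\<in>gedges G. fst p \<in> e) \<and> (\<exists>e\<in>gedges G. snd p \<in> e)"
    by (rule successively_linked_halfs[OF s])
qed

lemma linked_path_forward:
  assumes jk: "j < k" "k < length w"
    and links: "\<And>i. Suc i < length w \<Longrightarrow> linked G (w!i) (w!Suc i)"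
  shows "linked_path G (snd (w!j)) (map (nth w) [Suc j..<k]) (fst (w!k))"
proof -
  define g where "g i = (if i = j then (snd (w!j), snd (w!j))
    else if i = k then (fst (w!k), fst (w!k)) else w!i)" for i
  have "map g [Suc j..<k] = map (nth w) [Suc j..<k]" unfolding g_def by (rule map_cong) auto
  then have "map g [j..<Suc k] = (snd (w!j), snd (w!j)) # map (nth w) [Suc j..<k] @ [(fst (w!k), fst (w!k))]"
    using jk by (simp add: upt_conv_Cons g_def)
  moreover have "successively (linked G) (map g [j..<Suc k])"
  proof (rule successively_map_upt)
    fix i assume i: "j \<le> i" "Suc i < Suc k"
    have "snd (g i) = snd (w!i)" "fst (g (Suc i)) = fst (w!Suc i)" using i unfolding g_def by auto
    then show "linked G (g i) (g (Suc i))" using links[of i] i jk unfolding linked_def by simp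
  qed
  ultimately show ?thesis unfolding linked_path_def by simp
qed

lemma linked_path_backward:
  assumes kj: "k < j" "j < length w"
    and links: "\<And>i. Suc i < length w \<Longrightarrow> linked G (w!i) (w!Suc i)"
  shows "linked_path G (fst (w!j)) (map (\<lambda>i. (snd (w!i), fst (w!i))) (rev [Suc k..<j])) (snd (w!k))"
proof -
  define g where "g i = (if i = j then (fst (w!j), fst (w!j))
    else if i = k then (snd (w!k), snd (w!k)) else (snd (w!i), fst (w!i)))" for i
  have "map g [Suc k..<j] = map (\<lambda>i. (snd (w!i), fst (w!i))) [Suc k..<j]"
    unfolding g_def by (rule map_cong) auto
  then have "rev (map g [k..<Suc j]) = (fst (w!j), fst (w!j))
      # map (\<lambda>i. (snd (w!i), fst (w!i))) (rev [Suc k..<j]) @ [(snd (w!k), snd (w!k))]"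
    using kj by (simp add: upt_conv_Cons g_def rev_map)
  moreover have "successively (linked G) (rev (map g [k..<Suc j]))"
    unfolding successively_rev
  proof (rule successively_map_upt)
    fix i assume i: "k \<le> i" "Suc i < Suc j"
    have "fst (g i) = snd (w!i)" "snd (g (Suc i)) = fst (w!Suc i)" using i unfolding g_def by auto
    then show "linked G (g (Suc i)) (g i)" using links[of i] i kj unfolding linked_def
      by (simp add: insert_commute)
  qed
  ultimately show ?thesis unfolding linked_path_def by simp
qed

lemma closed_walk_concat:
  assumes n: "n > 0"
    and segs: "\<And>i. i < n \<Longrightarrow> seg i \<noteq> [] \<and> successively (linked G) (seg i)"
    and links: "\<And>i. i < n \<Longrightarrow> linked G (last (seg i)) (hd (seg (Suc i mod n)))"
    and steps: "\<forall>(a, b)\<in>set (concat (map seg [0..<n])). a \<in> ghalfs G \<and> b \<in> ghalfs G \<and> a \<noteq> b \<and> ginc G a = ginc G b"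
  shows "closed_walk G (concat (map seg [0..<n]))"
proof -
  define W where "W = concat (map seg [0..<n])"
  have "\<forall>i<n. seg i \<noteq> [] \<and> successively (linked G) (seg i)" using segs by blast
  moreover have "\<forall>i. Suc i < n \<longrightarrow> linked G (last (seg i)) (hd (seg (Suc i)))"
    using links by (metis Suc_lessD mod_less)
  ultimately have "successively (linked G) W \<and> W \<noteq> [] \<and> hd W = hd (seg 0) \<and> last W = last (seg (n - 1))"
    using successively_concat[of n seg "linked G"] n unfolding W_def by blast
  moreover have "linked G (last (seg (n - 1))) (hd (seg 0))" using links[of "n - 1"] n by simp
  ultimately have "\<forall>i<length W. linked G (W!i) (W!(Suc i mod length W))"
    unfolding cyclic_iff_successively[where R="linked G"] by simp
  then show ?thesis using steps unfolding closed_walk_def linked_def W_def by blast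
qed

text \<open>Arcs \<open>arc i\<close> running from \<open>Y i\<close> to \<open>X i\<close>, joined into one closed walk by the
  transitions from \<open>X (i - 1)\<close> to \<open>Y i\<close>, indices taken modulo \<open>n\<close>.\<close>
definition cyclic_join ::
  "nat \<Rightarrow> (nat \<Rightarrow> 'h) \<Rightarrow> (nat \<Rightarrow> ('h \<times> 'h) list) \<Rightarrow> (nat \<Rightarrow> 'h) \<Rightarrow> ('h \<times> 'h) list" where
  "cyclic_join n Y arc X = concat (map (\<lambda>i. (X ((i + n - 1) mod n), Y i) # arc i) [0..<n])"

lemma closed_walk_cyclic_join:
  assumes n: "n > 0"
    and arcs: "\<And>i. i < n \<Longrightarrow> linked_path G (Y i) (arc i) (X i)"
    and steps: "\<And>i a b. i < n \<Longrightarrow> (a, b) \<in> set ((X ((i + n - 1) mod n), Y i) # arc i) \<Longrightarrow>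
      a \<in> ghalfs G \<and> b \<in> ghalfs G \<and> a \<noteq> b \<and> ginc G a = ginc G b"
  shows "closed_walk G (cyclic_join n Y arc X)"
  unfolding cyclic_join_def
proof (rule closed_walk_concat[OF n])
  fix i assume i: "i < n"
  show "(X ((i + n - 1) mod n), Y i) # arc i \<noteq> [] \<and> successively (linked G) ((X ((i + n - 1) mod n), Y i) # arc i)"
    using linked_path_segment[OF arcs[OF i]] by simp
  have "(Suc i mod n + n - 1) mod n = i"
    using i n by (cases "Suc i < n") (auto simp: mod_if)
  then show "linked G (last ((X ((i + n - 1) mod n), Y i) # arc i))
      (hd ((X ((Suc i mod n + n - 1) mod n), Y (Suc i mod n)) # arc (Suc i mod n)))"
    using linked_path_segment[OF arcs[OF i]] by simp
next
  show "\<forall>(a, b)\<in>set (concat (map (\<lambda>i. (X ((i + n - 1) mod n), Y i) # arc i) [0..<n])).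
      a \<in> ghalfs G \<and> b \<in> ghalfs G \<and> a \<noteq> b \<and> ginc G a = ginc G b"
  proof
    fix p assume "p \<in> set (concat (map (\<lambda>i. (X ((i + n - 1) mod n), Y i) # arc i) [0..<n]))"
    then obtain i where "i < n" "p \<in> set ((X ((i + n - 1) mod n), Y i) # arc i)" by auto
    then show "case p of (a, b) \<Rightarrow> a \<in> ghalfs G \<and> b \<in> ghalfs G \<and> a \<noteq> b \<and> ginc G a = ginc G b"
      using steps[of i "fst p" "snd p"] by (simp add: case_prod_beta)
  qed
qed

lemma proj_concat: "proj P (concat xss) = concat (map (proj P) xss)"
  unfolding proj_def by (induction xss) auto

lemma proj_cyclic_join:
  assumes "\<And>i. i < length ts \<Longrightarrow> proj P ((X ((i + length ts - 1) mod length ts), Y i) # arc i) = [ts!i]"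
  shows "proj P (cyclic_join (length ts) Y arc X) = ts"
proof -
  have "concat (map (\<lambda>i. proj P ((X ((i + length ts - 1) mod length ts), Y i) # arc i)) [0..<length ts])
      = concat (map (\<lambda>i. [ts!i]) [0..<length ts])"
    using assms by (intro arg_cong[where f=concat] map_cong) auto
  also have "\<dots> = ts" by (simp add: map_nth)
  finally show ?thesis unfolding cyclic_join_def proj_concat by (simp add: comp_def)
qed

section \<open>Circuit partitions and the touch-graph\<close>

lemma del_edges_simps [simp]:
  "gverts (del_edges G E) = gverts G" "ghalfs (del_edges G E) = ghalfs G - \<Union>E"
  "gedges (del_edges G E) = gedges G - E" "ginc (del_edges G E) = ginc G"
  unfolding del_edges_def by simp_all

lemma Tch_simps [simp]:
  "gverts (Tch G P) = P" "ghalfs (Tch G P) = \<Union>(trans_of ` P)" "gedges (Tch G P) = tau G P"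
  unfolding Tch_def by simp_all

lemma wf_graphD:
  assumes "wf_graph G"
  shows "finite (gverts G)" "finite (ghalfs G)" "h \<in> ghalfs G \<Longrightarrow> ginc G h \<in> gverts G"
    and "e \<in> gedges G \<Longrightarrow> e \<subseteq> ghalfs G" "e \<in> gedges G \<Longrightarrow> card e = 2"
    and "h \<in> ghalfs G \<Longrightarrow> \<exists>!e. e \<in> gedges G \<and> h \<in> e"
  using assms unfolding wf_graph_def by (simp_all add: image_subset_iff)

lemma wf_graph_edge_unique:
  assumes "wf_graph G" "e \<in> gedges G" "e' \<in> gedges G" "h \<in> e" "h \<in> e'"
  shows "e = e'"
proof -
  have "h \<in> ghalfs G" using wf_graphD(4)[OF assms(1,2)] assms(4) by blast
  then show ?thesis using wf_graphD(6)[OF assms(1)] assms(2-5) by blast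
qed

lemma wf_graph_edge_other:
  assumes "wf_graph G" "{x, z} \<in> gedges G" "{x, y} \<in> gedges G"
  shows "z = y"
proof -
  have "{x, z} = {x, y}" using wf_graph_edge_unique[OF assms, of x] by simp
  moreover have "z \<noteq> x" "y \<noteq> x" using wf_graphD(5)[OF assms(1)] assms(2,3) by fastforce+
  ultimately show "z = y" by (auto simp: doubleton_eq_iff)
qed

lemma finite_gedges:
  assumes "wf_graph G"
  shows "finite (gedges G)"
proof -
  have "gedges G \<subseteq> Pow (ghalfs G)" using wf_graphD(4)[OF assms] by blast
  then show ?thesis by (rule finite_subset) (simp add: wf_graphD(2)[OF assms])
qed

lemma orientation_some:
  assumes "\<forall>e\<in>gedges G. e \<noteq> {}"
  shows "orientation G (\<lambda>e. SOME h. h \<in> e)"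
  using assms unfolding orientation_def by (simp add: some_in_eq)

locale partitioned_graph =
  fixes F :: "('v, 'h) graph" and P :: "('h \<times> 'h) list set set" and E :: "'h set set"
  assumes wf: "wf_graph F" and four_reg: "four_regular F" and partition: "circuit_partition F P"
    and E_edges: "E \<subseteq> gedges F" and E_once: "\<forall>C\<in>P. card (traversed C \<inter> E) \<le> 1"
begin

abbreviation "H \<equiv> ghalfs F"
abbreviation "FE \<equiv> del_edges F E"
abbreviation "T \<equiv> Tch F P"
abbreviation "st \<equiv> st_of P"

lemma circuit_walk:
  assumes "C \<in> P"
  obtains w where "closed_walk F w" "w \<noteq> []" "distinct (walk_halfs w)" "C = circ_class w"
proof -
  have "is_circuit F C" using partition assms unfolding circuit_partition_def by (elim conjE) blast
  then show thesis using that unfolding is_circuit_def by blast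
qed

lemma trans_ofE:
  assumes "C \<in> P" "s \<in> trans_of C"
  obtains a b where "s = {a, b}" "a \<noteq> b" "a \<in> H" "b \<in> H" "ginc F a = ginc F b"
proof -
  obtain w where w: "closed_walk F w" "C = circ_class w" using circuit_walk[OF assms(1)] by metis
  then obtain a b where "(a, b) \<in> set w" "s = {a, b}"
    using assms(2) unfolding w(2) trans_of_circ_class by auto
  then show thesis using that w(1) unfolding closed_walk_def by blast
qed

lemma trans_of_card: "C \<in> P \<Longrightarrow> s \<in> trans_of C \<Longrightarrow> card s = 2 \<and> s \<subseteq> H"
  by (erule trans_ofE) auto

lemma trans_of_unique:
  assumes "C \<in> P" "s \<in> trans_of C" "h \<in> s" "C' \<in> P" "s' \<in> trans_of C'" "h \<in> s'"
  shows "C = C' \<and> s = s'"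
proof -
  have "h \<in> H" using trans_of_card assms by blast
  then have "\<exists>!p. fst p \<in> P \<and> snd p \<in> trans_of (fst p) \<and> h \<in> snd p"
    using partition unfolding circuit_partition_def by blast
  then have "(C, s) = (C', s')" using assms by (metis fst_conv snd_conv)
  then show ?thesis by simp
qed

lemma st_of_eq:
  assumes "C \<in> P" "s \<in> trans_of C" "h \<in> s"
  shows "st h = s"
  unfolding st_of_def
proof (rule the_equality)
  show "\<exists>C\<in>P. s \<in> trans_of C \<and> h \<in> s" using assms by blast
qed (use trans_of_unique assms in blast)

lemma st_of_in:
  assumes "h \<in> H"
  obtains C where "C \<in> P" "st h \<in> trans_of C" "h \<in> st h"
proof -
  obtain p where "fst p \<in> P" "snd p \<in> trans_of (fst p)" "h \<in> snd p"
    using partition assms unfolding circuit_partition_def by blast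
  then show thesis using that[of "fst p"] st_of_eq[of "fst p" "snd p" h] by simp
qed

lemma st_of_eq_iff:
  assumes "h \<in> H" "C \<in> P" "s \<in> trans_of C"
  shows "st h = s \<longleftrightarrow> h \<in> s"
proof -
  obtain C' where "h \<in> st h" using st_of_in[OF assms(1)] by blast
  then show ?thesis using st_of_eq[OF assms(2,3)] by blast
qed

lemma ginc_Tch: "C \<in> P \<Longrightarrow> s \<in> trans_of C \<Longrightarrow> ginc T s = C"
  unfolding Tch_def
proof (simp, rule the_equality)
  fix C' assume a: "C \<in> P" "s \<in> trans_of C" "C' \<in> P \<and> s \<in> trans_of C'"
  obtain h where "h \<in> s" using trans_of_card[OF a(1,2)] by fastforce
  then show "C' = C" using trans_of_unique a by blast
qed simp

lemma tauE:
  assumes "t \<in> tau F P"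
  obtains v s1 s2 C1 C2 where "t = {s1, s2}" "s1 \<noteq> s2" "s1 \<inter> s2 = {}"
    "s1 \<union> s2 = {h\<in>H. ginc F h = v}"
    "C1 \<in> P" "s1 \<in> trans_of C1" "C2 \<in> P" "s2 \<in> trans_of C2" "v \<in> gverts F"
proof -
  obtain v s1 s2 where v: "v \<in> gverts F" "t = {s1, s2}" "card s1 = 2" "s1 \<inter> s2 = {}"
    "s1 \<union> s2 = {h\<in>H. ginc F h = v}" and sub: "t \<subseteq> \<Union>(trans_of ` P)"
    using assms unfolding tau_def transition_at_def by blast
  have "s1 \<noteq> s2" using v(3,4) by auto
  moreover obtain C1 where "C1 \<in> P" "s1 \<in> trans_of C1" using sub v(2) by blast
  moreover obtain C2 where "C2 \<in> P" "s2 \<in> trans_of C2" using sub v(2) by blast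
  ultimately show thesis using that v by blast
qed

lemma tau_pairE:
  assumes "{a, b} \<in> tau F P"
  obtains v Ca Cb where "a \<noteq> b" "a \<inter> b = {}" "a \<union> b = {h\<in>H. ginc F h = v}"
    "Ca \<in> P" "a \<in> trans_of Ca" "Cb \<in> P" "b \<in> trans_of Cb"
proof -
  obtain v s1 s2 C1 C2 where t: "{a, b} = {s1, s2}" "s1 \<noteq> s2" "s1 \<inter> s2 = {}"
    "s1 \<union> s2 = {h\<in>H. ginc F h = v}" "C1 \<in> P" "s1 \<in> trans_of C1" "C2 \<in> P" "s2 \<in> trans_of C2"
    by (rule tauE[OF assms])
  then have "(a = s1 \<and> b = s2) \<or> (a = s2 \<and> b = s1)" by (auto simp: doubleton_eq_iff)
  then show thesis
  proof
    assume "a = s1 \<and> b = s2"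
    then show thesis using that t by blast
  next
    assume "a = s2 \<and> b = s1"
    then show thesis using that[of v C2 C1] t by (auto simp: Int_commute Un_commute)
  qed
qed

lemma tau_unique:
  assumes t: "t \<in> tau F P" and t': "t' \<in> tau F P" and s: "s \<in> t" "s \<in> t'"
  shows "t = t'"
proof -
  have other: "\<exists>r v. t = {s, r} \<and> s \<inter> r = {} \<and> s \<union> r = {h\<in>H. ginc F h = v}"
    if t_in: "t \<in> tau F P" and s_in: "s \<in> t" for t
  proof -
    obtain v s1 s2 C1 C2 where t: "t = {s1, s2}" "s1 \<noteq> s2" "s1 \<inter> s2 = {}"
      "s1 \<union> s2 = {h\<in>H. ginc F h = v}"
      "C1 \<in> P" "s1 \<in> trans_of C1" "C2 \<in> P" "s2 \<in> trans_of C2" "v \<in> gverts F"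
      by (rule tauE[OF t_in])
    show ?thesis
    proof (cases "s = s1")
      case True
      then show ?thesis using t by blast
    next
      case False
      then have "s = s2" using t(1) s_in by simp
      then show ?thesis using t by (intro exI[of _ s1] exI[of _ v]) (auto simp: insert_commute)
    qed
  qed
  obtain r v where r: "t = {s, r}" "s \<inter> r = {}" "s \<union> r = {h\<in>H. ginc F h = v}"
    using other[OF t s(1)] by blast
  obtain r' v' where r': "t' = {s, r'}" "s \<inter> r' = {}" "s \<union> r' = {h\<in>H. ginc F h = v'}"
    using other[OF t' s(2)] by blast
  obtain C where "C \<in> P" "s \<in> trans_of C" using t s(1) unfolding tau_def by blast
  then obtain h where h: "h \<in> s" using trans_of_card by fastforce
  then have "ginc F h = v" "ginc F h = v'" using r(3) r'(3) by blast+
  then have "v = v'" by simp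
  then have "r = r'" using r(2,3) r'(2,3) by blast
  then show ?thesis using r(1) r'(1) by simp
qed

lemma finite_circuits: "finite P"
proof -
  have "inj_on trans_of P"
  proof (rule inj_onI)
    fix C C' assume C: "C \<in> P" "C' \<in> P" "trans_of C = trans_of C'"
    obtain w where w: "w \<noteq> []" "C = circ_class w" using circuit_walk[OF C(1)] by metis
    then obtain p where "p \<in> set w" using hd_in_set by blast
    then have s: "(\<lambda>(a, b). {a, b}) p \<in> trans_of C" unfolding w(2) trans_of_circ_class by blast
    then obtain h where "h \<in> (\<lambda>(a, b). {a, b}) p" using trans_of_card C(1) by fastforce
    then show "C = C'" using trans_of_unique[OF C(1) s _ C(2)] s C(3) by metis
  qed
  moreover have "trans_of ` P \<subseteq> Pow (Pow H)" using trans_of_card by blast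
  then have "finite (trans_of ` P)" by (rule finite_subset) (simp add: wf_graphD(2)[OF wf])
  ultimately show ?thesis by (rule finite_imageD[rotated])
qed

lemma wf_pregraph_Tch: "wf_pregraph T"
  unfolding wf_pregraph_def Tch_simps
proof (intro conjI allI impI ballI)
  show "finite P" by (rule finite_circuits)
  have "tau F P \<subseteq> Pow (Pow H)" unfolding tau_def transition_at_def by blast
  then show "finite (tau F P)" by (rule finite_subset) (simp add: wf_graphD(2)[OF wf])
next
  fix e assume "e \<in> tau F P"
  then show "card e = 2" "e \<subseteq> \<Union>(trans_of ` P)" by (elim tauE; auto)+
next
  show "ginc T ` \<Union>(trans_of ` P) \<subseteq> P" using ginc_Tch by auto
next
  fix h e e' assume "e \<in> tau F P" "e' \<in> tau F P" "h \<in> e" "h \<in> e'"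
  then show "e = e'" by (rule tau_unique)
qed

lemma closed_walk_FE_memD:
  assumes "closed_walk FE W" "(a, b) \<in> set W"
  shows "a \<in> ghalfs FE" "b \<in> ghalfs FE" "a \<in> H" "b \<in> H" "a \<noteq> b" "ginc F a = ginc F b"
proof -
  have "a \<in> ghalfs FE \<and> b \<in> ghalfs FE \<and> a \<noteq> b \<and> ginc FE a = ginc FE b"
    using assms unfolding closed_walk_def by blast
  then show "a \<in> ghalfs FE" "b \<in> ghalfs FE" "a \<in> H" "b \<in> H" "a \<noteq> b" "ginc F a = ginc F b"
    by auto
qed

text \<open>Two single transitions of distinct circuits at a common vertex of the 4-regular
  graph \<open>F\<close> partition the four half-edges there, hence form a transition.\<close>
lemma st_pair_in_tau:
  assumes "a \<in> H" "b \<in> H" "ginc F a = ginc F b" "st a \<noteq> st b"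
  shows "{st a, st b} \<in> tau F P"
proof -
  obtain Ca where Ca: "Ca \<in> P" "st a \<in> trans_of Ca" "a \<in> st a" by (rule st_of_in[OF assms(1)])
  obtain Cb where Cb: "Cb \<in> P" "st b \<in> trans_of Cb" "b \<in> st b" by (rule st_of_in[OF assms(2)])
  define v where "v = ginc F a"
  have vV: "v \<in> gverts F" unfolding v_def by (rule wf_graphD(3)[OF wf assms(1)])
  have at_v: "s \<subseteq> {h\<in>H. ginc F h = v}" if "C \<in> P" "s \<in> trans_of C" "h \<in> s" "ginc F h = v" for C s h
    using that by (elim trans_ofE) auto
  have sa: "st a \<subseteq> {h\<in>H. ginc F h = v}" using at_v[OF Ca] unfolding v_def by simp
  have sb: "st b \<subseteq> {h\<in>H. ginc F h = v}" using at_v[OF Cb] assms(3) unfolding v_def by simp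
  have disj: "st a \<inter> st b = {}" using trans_of_unique[OF Ca(1,2) _ Cb(1,2)] assms(4) by blast
  have ca: "card (st a) = 2" and cb: "card (st b) = 2" using trans_of_card Ca Cb by blast+
  then have "card (st a \<union> st b) = 4" using disj by (simp add: card_Un_disjoint card_ge_0_finite)
  moreover have "card {h\<in>H. ginc F h = v} = 4" using four_reg vV unfolding four_regular_def by blast
  moreover have "finite {h\<in>H. ginc F h = v}" using wf_graphD(2)[OF wf] by simp
  ultimately have "st a \<union> st b = {h\<in>H. ginc F h = v}" using sa sb
    by (metis Un_subset_iff card_subset_eq)
  then have "transition_at F v {st a, st b}" unfolding transition_at_def
    using vV ca cb disj by blast
  moreover have "{st a, st b} \<subseteq> \<Union>(trans_of ` P)" using Ca Cb by blast
  ultimately show ?thesis unfolding tau_def by blast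
qed

lemma trans_of_nth:
  "i < length w \<Longrightarrow> {fst (w!i), snd (w!i)} \<in> trans_of (circ_class w)"
  unfolding trans_of_circ_class by (auto simp: image_iff intro!: bexI[of _ "w!i"])

text \<open>Both ends of an edge of \<open>F\<close> lie on the same circuit of \<open>P\<close>: a circuit leaving a
  vertex through a half-edge continues along its edge.\<close>
lemma ginc_Tch_st_edge:
  assumes xy: "{x, y} \<in> gedges F"
  shows "ginc T (st x) = ginc T (st y)"
proof -
  have "x \<in> H" using wf_graphD(4)[OF wf xy] by blast
  then obtain C where C: "C \<in> P" "st x \<in> trans_of C" "x \<in> st x" by (rule st_of_in)
  obtain w where w: "closed_walk F w" "C = circ_class w" using circuit_walk[OF C(1)] by metis
  obtain i where i: "i < length w" "st x = {fst (w!i), snd (w!i)}"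
    using C(2) unfolding w(2) trans_of_circ_class by (auto simp: in_set_conv_nth)
  have st_C: "ginc T (st h) = C" if "j < length w" "h = fst (w!j) \<or> h = snd (w!j)" for h j
  proof -
    have "{fst (w!j), snd (w!j)} \<in> trans_of C" using trans_of_nth[OF that(1)] w(2) by simp
    then show ?thesis using st_of_eq[OF C(1)] ginc_Tch[OF C(1)] that(2) by auto
  qed
  have "x = fst (w!i) \<or> x = snd (w!i)" using C(3) i(2) by auto
  then show ?thesis
  proof
    assume x: "x = snd (w!i)"
    have "{x, fst (w!(Suc i mod length w))} \<in> gedges F" using closed_walk_nth(5)[OF w(1) i(1)] x by simp
    then have "y = fst (w!(Suc i mod length w))" using wf_graph_edge_other[OF wf _ xy] by blast
    then show ?thesis using st_C[of i x] st_C[of "Suc i mod length w" y] x i(1) Suc_mod_less by auto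
  next
    assume x: "x = fst (w!i)"
    obtain j where j: "j < length w" "Suc j mod length w = i" using ex_Suc_mod_eq[OF i(1)] by blast
    have "{x, snd (w!j)} \<in> gedges F" using closed_walk_nth(5)[OF w(1) j(1)] x j(2) by (simp add: insert_commute)
    then have "y = snd (w!j)" using wf_graph_edge_other[OF wf _ xy] by blast
    then show ?thesis using st_C[of i x] st_C[of j y] x i(1) j(1) by auto
  qed
qed

lemma proj_trav_closed_walk:
  assumes W: "closed_walk FE W"
  shows "trav_closed_walk T (proj P W)"
proof -
  define xs where "xs = map (\<lambda>(a, b). (st a, st b)) W"
  define Q where "Q = (\<lambda>(s::'h set, s'::'h set). s \<noteq> s')"
  have pw: "proj P W = filter Q xs" unfolding proj_def xs_def Q_def ..
  have edges: "{s, s'} \<in> gedges T" if "(s, s') \<in> set (proj P W)" for s s'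
  proof -
    have "(s, s') \<in> set xs" "s \<noteq> s'" using that unfolding pw Q_def by auto
    then obtain a b where ab: "(a, b) \<in> set W" "s = st a" "s' = st b" unfolding xs_def by auto
    show ?thesis unfolding Tch_simps ab(2,3)
      by (rule st_pair_in_tau) (use closed_walk_FE_memD[OF W ab(1)] \<open>s \<noteq> s'\<close> ab in auto)
  qed
  have "\<forall>i<length xs. ginc T (snd (xs!i)) = ginc T (fst (xs!(Suc i mod length xs)))"
  proof (intro allI impI)
    fix i assume i: "i < length xs"
    then have iW: "i < length W" "Suc i mod length W < length W" unfolding xs_def by (auto simp: Suc_mod_less)
    have "{snd (W!i), fst (W!(Suc i mod length W))} \<in> gedges F"
      using closed_walk_nth(5)[OF W iW(1)] by simp
    from ginc_Tch_st_edge[OF this]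
    show "ginc T (snd (xs!i)) = ginc T (fst (xs!(Suc i mod length xs)))"
      using iW unfolding xs_def by (simp add: case_prod_beta)
  qed
  moreover have "\<forall>x\<in>set xs. \<not> Q x \<longrightarrow> ginc T (fst x) = ginc T (snd x)" unfolding Q_def by auto
  ultimately have "\<forall>i<length (filter Q xs). ginc T (snd (filter Q xs!i))
      = ginc T (fst (filter Q xs!(Suc i mod length (filter Q xs))))"
    by (rule cyclic_links_filter)
  then show ?thesis unfolding trav_closed_walk_def using edges unfolding pw by auto
qed

lemma proj_circuit:
  assumes "C \<in> P" "W \<in> C"
  shows "proj P W = []"
proof -
  have "st a = st b" if "(a, b) \<in> set W" for a b
  proof -
    have "{a, b} \<in> trans_of C" unfolding trans_of_def using that assms(2) by blast
    then show ?thesis using st_of_eq[OF assms(1)] by simp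
  qed
  then show ?thesis unfolding proj_def by (auto simp: filter_empty_conv)
qed

section \<open>Projection of signed traversal vectors\<close>

lemma orientation_tau_trans_of:
  assumes "orientation T D" "t \<in> tau F P"
  obtains C where "C \<in> P" "D t \<in> trans_of C" "D t \<in> t"
proof -
  have "D t \<in> t" using assms unfolding orientation_def by simp
  then show thesis using that assms(2) unfolding tau_def by blast
qed

definition edge_of :: "'h \<Rightarrow> 'h set" where
  "edge_of h = (THE e. e \<in> gedges F \<and> h \<in> e)"

definition half_sign :: "('h set \<Rightarrow> 'h) \<Rightarrow> 'h \<Rightarrow> int" where
  "half_sign D' h = (if D' (edge_of h) = h then -1 else 1)"

definition touch_map ::
  "('h set set \<Rightarrow> 'h set) \<Rightarrow> ('h set \<Rightarrow> 'h) \<Rightarrow> ('h set \<Rightarrow> 'a::comm_ring_1) \<Rightarrow> 'h set set \<Rightarrow> 'a"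
  where "touch_map D D' x t =
    (if t \<in> tau F P then \<Sum>h\<in>D t. of_int (half_sign D' h) * x (edge_of h) else 0)"

lemma edge_of_eq: "e \<in> gedges F \<Longrightarrow> h \<in> e \<Longrightarrow> edge_of h = e"
  unfolding edge_of_def by (rule the_equality) (auto dest: wf_graph_edge_unique[OF wf])

lemma edge_of_in: "h \<in> H \<Longrightarrow> edge_of h \<in> gedges F \<and> h \<in> edge_of h"
  using wf_graphD(6)[OF wf] edge_of_eq by blast

lemma touch_map_hom: "module_hom scale_fun scale_fun (touch_map D D')"
  unfolding module_hom_iff
proof (intro conjI allI fun_module.module_axioms)
  fix x y :: "'h set \<Rightarrow> 'a::comm_ring_1"
  show "touch_map D D' (x + y) = touch_map D D' x + touch_map D D' y"
    unfolding touch_map_def by (simp add: fun_eq_iff sum.distrib algebra_simps)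
next
  fix c and x :: "'h set \<Rightarrow> 'a::comm_ring_1"
  show "touch_map D D' (scale_fun c x) = scale_fun c (touch_map D D' x)"
    unfolding touch_map_def scale_fun_def by (simp add: fun_eq_iff sum_distrib_left algebra_simps)
qed

lemma touch_map_of_int:
  "touch_map D D' (\<lambda>e. of_int (x e)) = (\<lambda>t. of_int (touch_map D D' x t))"
  unfolding touch_map_def by (simp add: fun_eq_iff)

lemma half_sign_trav_sign:
  assumes pq: "{p, q} \<in> gedges F" and h: "h \<in> H" and D': "D' (edge_of h) \<in> edge_of h"
  shows "half_sign D' h * trav_sign D' (edge_of h) (p, q) =
    (if q = h then 1 else 0) - (if p = h then 1 else 0)"
proof (cases "{p, q} = edge_of h")
  case True
  have "card {p, q} = 2" by (rule wf_graphD(5)[OF wf pq])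
  then have "p \<noteq> q" by auto
  moreover have "h \<in> {p, q}" "D' {p, q} \<in> {p, q}" using edge_of_in[OF h] D' True by simp_all
  ultimately show ?thesis unfolding half_sign_def trav_sign_def True[symmetric] by auto
next
  case False
  then have "p \<noteq> h" "q \<noteq> h" using edge_of_eq[OF pq] by auto
  then show ?thesis using False unfolding trav_sign_def by simp
qed

lemma net_count_half:
  assumes W: "closed_walk FE W" and D': "orientation FE D'" and h: "h \<in> H"
  shows "(\<Sum>i<length W. (if fst (W!i) = h then 1 else 0) - (if snd (W!i) = h then 1 else 0))
     = half_sign D' h * sigma FE D' W (edge_of h)"
proof (cases "edge_of h \<in> E")
  case True
  then have "h \<notin> ghalfs FE" using edge_of_in[OF h] by auto
  then have "(if fst (W!i) = h then 1 else 0) - (if snd (W!i) = h then 1 else (0::int)) = 0"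
    if "i < length W" for i
    using closed_walk_nth(1,2)[OF W that] by auto
  moreover have "sigma FE D' W (edge_of h) = 0" unfolding sigma_def sigma_trav_def using True by simp
  ultimately show ?thesis by simp
next
  case False
  define n where "n = length W"
  define e where "e = edge_of h"
  have eFE: "e \<in> gedges FE" using False edge_of_in[OF h] unfolding e_def by simp
  have De: "D' e \<in> e" using D' eFE unfolding orientation_def by blast
  have "(\<Sum>i<n. (if fst (W!i) = h then 1 else 0) - (if snd (W!i) = h then 1 else (0::int)))
      = (\<Sum>i<n. (if fst (W!(Suc i mod n)) = h then 1 else 0) - (if snd (W!i) = h then 1 else 0))"
    by (simp add: sum_subtractf sum_Suc_mod[of "\<lambda>i. if fst (W!i) = h then 1 else (0::int)"])
  also have "\<dots> = (\<Sum>i<n. half_sign D' h * trav_sign D' e (snd (W!i), fst (W!(Suc i mod n))))"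
  proof (rule sum.cong[OF refl])
    fix i assume "i \<in> {..<n}"
    then have "{snd (W!i), fst (W!(Suc i mod n))} \<in> gedges F"
      using closed_walk_nth(5)[OF W] unfolding n_def by simp
    from half_sign_trav_sign[OF this h] De
    show "(if fst (W!(Suc i mod n)) = h then 1 else 0) - (if snd (W!i) = h then 1 else 0)
        = half_sign D' h * trav_sign D' e (snd (W!i), fst (W!(Suc i mod n)))"
      unfolding e_def by simp
  qed
  also have "\<dots> = half_sign D' h * sigma FE D' W e"
    unfolding sigma_def sigma_trav_eq[OF eFE]
    by (simp add: sum_list_sum_nth atLeast0LessThan n_def nth_etrav sum_distrib_left)
  finally show ?thesis unfolding n_def e_def .
qed

lemma net_count:
  assumes W: "closed_walk FE W" and D': "orientation FE D'" and S: "S \<subseteq> H" "finite S"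
  shows "sum_list (map (\<lambda>(a, b). (if a \<in> S then 1 else 0) - (if b \<in> S then 1 else 0)) W)
    = (\<Sum>h\<in>S. half_sign D' h * sigma FE D' W (edge_of h))"
proof -
  define n where "n = length W"
  have "sum_list (map (\<lambda>(a, b). (if a \<in> S then 1 else 0) - (if b \<in> S then 1 else 0)) W)
      = (\<Sum>i<n. \<Sum>h\<in>S. (if fst (W!i) = h then 1 else 0) - (if snd (W!i) = h then 1 else (0::int)))"
    by (simp add: sum_list_sum_nth atLeast0LessThan n_def case_prod_beta sum_subtractf S(2))
  also have "\<dots> = (\<Sum>h\<in>S. \<Sum>i<n. (if fst (W!i) = h then 1 else 0) - (if snd (W!i) = h then 1 else (0::int)))"
    by (rule sum.swap)
  also have "\<dots> = (\<Sum>h\<in>S. half_sign D' h * sigma FE D' W (edge_of h))"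
    using net_count_half[OF W D'] S(1) unfolding n_def by (intro sum.cong) auto
  finally show ?thesis .
qed

lemma proj_trav_sign:
  assumes ab: "a \<in> H" "b \<in> H" "ginc F a = ginc F b" and D: "orientation T D" and t: "t \<in> tau F P"
  shows "(if st a \<noteq> st b then trav_sign D t (st a, st b) else 0)
    = (if a \<in> D t then 1 else 0) - (if b \<in> D t then 1 else 0)"
proof -
  obtain C where C: "C \<in> P" "D t \<in> trans_of C" "D t \<in> t" by (rule orientation_tau_trans_of[OF D t])
  have ia: "a \<in> D t \<longleftrightarrow> st a = D t" and ib: "b \<in> D t \<longleftrightarrow> st b = D t"
    using st_of_eq_iff[OF ab(1) C(1,2)] st_of_eq_iff[OF ab(2) C(1,2)] by simp_all
  show ?thesis
  proof (cases "st a = st b")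
    case False
    have t': "{st a, st b} \<in> tau F P" by (rule st_pair_in_tau[OF ab False])
    show ?thesis
    proof (cases "{st a, st b} = t")
      case True
      then have "D t \<in> {st a, st b}" using C(3) by simp
      then have "D t = st a \<or> D t = st b" by simp
      then show ?thesis
      proof
        assume "D t = st a"
        then show ?thesis using False True unfolding ia ib trav_sign_def by simp
      next
        assume "D t = st b"
        then show ?thesis using False True unfolding ia ib trav_sign_def by simp
      qed
    next
      case not_t: False
      have "st a \<noteq> D t" "st b \<noteq> D t"
      proof -
        show "st a \<noteq> D t"
        proof
          assume "st a = D t"
          then show False using tau_unique[OF t' t, of "st a"] C(3) not_t by simp
        qed
        show "st b \<noteq> D t"
        proof
          assume "st b = D t"
          then show False using tau_unique[OF t' t, of "st b"] C(3) not_t by simp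
        qed
      qed
      then show ?thesis using not_t unfolding ia ib trav_sign_def by simp
    qed
  qed (simp add: ia ib)
qed

lemma sigma_proj_net_count:
  assumes W: "closed_walk FE W" and D: "orientation T D" and t: "t \<in> tau F P"
  shows "sigma_trav T D (proj P W) t =
    sum_list (map (\<lambda>(a, b). (if a \<in> D t then 1 else 0) - (if b \<in> D t then 1 else 0)) W)"
proof -
  have "sigma_trav T D (proj P W) t = sum_list (map (trav_sign D t) (proj P W))"
    using t by (simp add: sigma_trav_eq)
  also have "\<dots> = sum_list (map (\<lambda>(a, b). if st a \<noteq> st b then trav_sign D t (st a, st b) else 0) W)"
    unfolding proj_def by (simp add: sum_list_map_filter' comp_def case_prod_unfold)
  also have "\<dots> = sum_list (map (\<lambda>(a, b). (if a \<in> D t then 1 else 0) - (if b \<in> D t then 1 else 0)) W)"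
    using proj_trav_sign[OF _ _ _ D t] closed_walk_FE_memD[OF W]
    by (intro arg_cong[where f=sum_list] map_cong) auto
  finally show ?thesis .
qed

lemma sigma_proj:
  assumes W: "closed_walk FE W" and D: "orientation T D" and D': "orientation FE D'"
  shows "sigma_trav T D (proj P W) = touch_map D D' (sigma FE D' W)"
proof
  fix t
  show "sigma_trav T D (proj P W) t = touch_map D D' (sigma FE D' W) t"
  proof (cases "t \<in> tau F P")
    case True
    obtain C where "C \<in> P" "D t \<in> trans_of C" by (rule orientation_tau_trans_of[OF D True])
    then have "D t \<subseteq> H" "finite (D t)" using trans_of_card by (auto intro: card_ge_0_finite)
    from net_count[OF W D' this] show ?thesis
      unfolding sigma_proj_net_count[OF W D True] touch_map_def using True by simp
  qed (simp add: sigma_trav_def touch_map_def)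
qed

section \<open>Lifting closed walks of the touch-graph\<close>

lemma edge_FE_halfs: "e \<in> gedges FE \<Longrightarrow> h \<in> e \<Longrightarrow> h \<in> ghalfs FE"
proof -
  assume e: "e \<in> gedges FE" "h \<in> e"
  have "h \<notin> \<Union>E"
  proof
    assume "h \<in> \<Union>E"
    then obtain e' where "e' \<in> E" "h \<in> e'" by blast
    then have "e' = e" using wf_graph_edge_unique[OF wf _ _ _ e(2)] E_edges e(1) by auto
    then show False using \<open>e' \<in> E\<close> e(1) by simp
  qed
  then show ?thesis using wf_graphD(4)[OF wf] e by auto
qed

lemma finite_traversed_E: "finite (traversed C \<inter> E)"
  using finite_subset[OF E_edges finite_gedges[OF wf]] by simp

lemma circuit_walk_one_E_edge:
  assumes C: "C \<in> P" and w: "C = circ_class w" "distinct (walk_halfs w)" "w \<noteq> []"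
  obtains j where "j < length w" "\<And>i. i < length w \<Longrightarrow> i \<noteq> j \<Longrightarrow> walk_edge w i \<notin> E"
proof (cases "\<exists>j<length w. walk_edge w j \<in> E")
  case True
  then obtain j where j: "j < length w" "walk_edge w j \<in> E" by blast
  have "walk_edge w i \<notin> E" if i: "i < length w" "i \<noteq> j" for i
  proof
    assume "walk_edge w i \<in> E"
    then have "{walk_edge w i, walk_edge w j} \<subseteq> traversed C \<inter> E"
      using walk_edge_in_traversed i(1) j unfolding w(1) by auto
    then have "card {walk_edge w i, walk_edge w j} \<le> 1"
      using card_mono[OF finite_traversed_E] E_once C by (meson order_trans)
    moreover have "walk_edge w i \<noteq> walk_edge w j" using walk_edge_inj[OF w(2)] i j(1) by blast
    ultimately show False by simp
  qed
  then show thesis using that j(1) by blast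
next
  case False
  then show thesis using that[of 0] w(3) by auto
qed

text \<open>The only edge of \<open>E\<close> a circuit may traverse can be moved to the wrap-around position
  of a representing walk.\<close>
lemma circuit_walk_avoiding_E:
  assumes C: "C \<in> P"
  obtains w where "closed_walk F w" "distinct (walk_halfs w)" "trans_of C = (\<lambda>(a, b). {a, b}) ` set w"
    "\<And>i. Suc i < length w \<Longrightarrow> linked FE (w!i) (w!Suc i)"
proof -
  obtain w0 where w0: "closed_walk F w0" "w0 \<noteq> []" "distinct (walk_halfs w0)" "C = circ_class w0"
    by (rule circuit_walk[OF C])
  define n where "n = length w0"
  obtain j where j: "j < n" "\<And>i. i < n \<Longrightarrow> i \<noteq> j \<Longrightarrow> walk_edge w0 i \<notin> E"
    using circuit_walk_one_E_edge[OF C w0(4,3,2)] unfolding n_def by blast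
  define w where "w = rotate (Suc j) w0"
  have cw: "closed_walk F w" unfolding w_def by (rule closed_walk_rotate[OF w0(1)])
  moreover have "distinct (walk_halfs w)" unfolding w_def by (rule distinct_walk_halfs_rotate[OF w0(3)])
  moreover have "trans_of C = (\<lambda>(a, b). {a, b}) ` set w" unfolding w_def w0(4) trans_of_circ_class by simp
  ultimately show thesis
  proof (rule that)
    fix i assume i: "Suc i < length w"
    then have n: "length w = n" "Suc i < n" unfolding w_def n_def by auto
    have "walk_edge w i \<in> gedges F"
      using closed_walk_nth(5)[OF cw, of i] i unfolding walk_edge_def by simp
    moreover have "walk_edge w i = walk_edge w0 ((Suc j + i) mod n)"
      using walk_edge_rotate[of i w0 "Suc j"] n unfolding w_def n_def by simp
    then have "walk_edge w i \<notin> E" using j rotate_index_ne[OF j(1) n(2)] n(2) by simp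
    moreover have "walk_edge w i = {snd (w!i), fst (w!Suc i)}" using i by (simp add: walk_edge_def)
    ultimately show "linked FE (w!i) (w!Suc i)" unfolding linked_def by simp
  qed
qed

definition silent :: "'h \<times> 'h \<Rightarrow> bool" where
  "silent p \<longleftrightarrow> fst p \<noteq> snd p \<and> ginc F (fst p) = ginc F (snd p) \<and> st (fst p) = st (snd p)"

lemma proj_silent: "\<forall>p\<in>set xs. silent p \<Longrightarrow> proj P xs = []"
  unfolding proj_def silent_def by (auto simp: filter_empty_conv)

text \<open>The arc runs along the circuit, forwards or backwards, so as to avoid the
  wrap-around edge of the walk from \<open>circuit_walk_avoiding_E\<close>.\<close>
lemma circuit_arc:
  assumes C: "C \<in> P" and s: "s \<in> trans_of C" "s' \<in> trans_of C" "s \<noteq> s'"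
  obtains y arc x where "y \<in> s" "x \<in> s'" "linked_path FE y arc x" "\<forall>p\<in>set arc. silent p"
proof -
  obtain w where w: "closed_walk F w" "distinct (walk_halfs w)"
    "trans_of C = (\<lambda>(a, b). {a, b}) ` set w" "\<And>i. Suc i < length w \<Longrightarrow> linked FE (w!i) (w!Suc i)"
    using circuit_walk_avoiding_E[OF C] by blast
  have step: "silent (w!i)" if "i < length w" for i
  proof -
    have tr: "{fst (w!i), snd (w!i)} \<in> trans_of C"
      unfolding w(3) using that by (auto simp: image_iff intro!: bexI[of _ "w!i"])
    have "st (fst (w!i)) = {fst (w!i), snd (w!i)}" "st (snd (w!i)) = {fst (w!i), snd (w!i)}"
      by (rule st_of_eq[OF C tr], simp)+
    then show ?thesis using closed_walk_nth(3,4)[OF w(1) that] unfolding silent_def by simp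
  qed
  obtain j where j: "j < length w" "s = {fst (w!j), snd (w!j)}"
    using s(1) unfolding w(3) by (auto simp: in_set_conv_nth)
  obtain k where k: "k < length w" "s' = {fst (w!k), snd (w!k)}"
    using s(2) unfolding w(3) by (auto simp: in_set_conv_nth)
  have "j \<noteq> k" using j k s(3) by auto
  then consider "j < k" | "k < j" by linarith
  then show thesis
  proof cases
    case 1
    have "snd (w!j) \<in> s" "fst (w!k) \<in> s'" using j(2) k(2) by auto
    moreover have "\<forall>p\<in>set (map (nth w) [Suc j..<k]). silent p" using step k(1) by auto
    ultimately show thesis using linked_path_forward[OF 1 k(1) w(4)] by (intro that)
  next
    case 2
    have "fst (w!j) \<in> s" "snd (w!k) \<in> s'" using j(2) k(2) by auto
    moreover have "\<forall>p\<in>set (map (\<lambda>i. (snd (w!i), fst (w!i))) (rev [Suc k..<j])). silent p"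
    proof
      fix p assume "p \<in> set (map (\<lambda>i. (snd (w!i), fst (w!i))) (rev [Suc k..<j]))"
      then obtain i where "i < j" "p = (snd (w!i), fst (w!i))" by auto
      then show "silent p" using step[of i] j(1) unfolding silent_def by auto
    qed
    ultimately show thesis using linked_path_backward[OF 2 j(1) w(4)] by (intro that)
  qed
qed

lemma tau_cross_pair:
  assumes "{u, v} \<in> tau F P" "x \<in> u" "y \<in> v"
  shows "x \<noteq> y" "ginc F x = ginc F y" "st x = u" "st y = v" "u \<noteq> v"
proof -
  obtain vt Cu Cv where t: "u \<noteq> v" "u \<inter> v = {}" "u \<union> v = {h\<in>H. ginc F h = vt}"
    "Cu \<in> P" "u \<in> trans_of Cu" "Cv \<in> P" "v \<in> trans_of Cv"
    by (rule tau_pairE[OF assms(1)])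
  show "x \<noteq> y" using t(2) assms(2,3) by blast
  have "x \<in> {h\<in>H. ginc F h = vt}" "y \<in> {h\<in>H. ginc F h = vt}" using t(3) assms(2,3) by blast+
  then show "ginc F x = ginc F y" by simp
  show "st x = u" by (rule st_of_eq[OF t(4,5) assms(2)])
  show "st y = v" by (rule st_of_eq[OF t(6,7) assms(3)])
  show "u \<noteq> v" by (rule t(1))
qed

lemma arc_between_traversals:
  assumes "{u, v} \<in> tau F P" "{u', v'} \<in> tau F P" "ginc T v = ginc T u'" "v \<noteq> u'"
  obtains y arc x where "y \<in> v" "x \<in> u'" "linked_path FE y arc x" "\<forall>p\<in>set arc. silent p"
proof -
  have "v \<in> \<Union>(trans_of ` P)" "u' \<in> \<Union>(trans_of ` P)" using assms(1,2) unfolding tau_def by blast+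
  then obtain C C' where C: "C \<in> P" "v \<in> trans_of C" and C': "C' \<in> P" "u' \<in> trans_of C'" by blast
  have "C = C'" using assms(3) ginc_Tch[OF C] ginc_Tch[OF C'] by simp
  then have "u' \<in> trans_of C" using C' by simp
  then obtain y arc x where "y \<in> v" "x \<in> u'" "linked_path FE y arc x" "\<forall>p\<in>set arc. silent p"
    by (rule circuit_arc[OF C(1,2) _ assms(4)])
  then show thesis by (rule that)
qed

lemma linked_path_FE_halfs:
  assumes "linked_path FE y arc x"
  shows "y \<in> ghalfs FE" "x \<in> ghalfs FE" "(a, b) \<in> set arc \<Longrightarrow> a \<in> ghalfs FE \<and> b \<in> ghalfs FE"
proof -
  obtain e where "e \<in> gedges FE" "y \<in> e" using linked_path_halfs(1)[OF assms] by blast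
  then show "y \<in> ghalfs FE" by (rule edge_FE_halfs)
  obtain e' where "e' \<in> gedges FE" "x \<in> e'" using linked_path_halfs(2)[OF assms] by blast
  then show "x \<in> ghalfs FE" by (rule edge_FE_halfs)
  assume ab: "(a, b) \<in> set arc"
  obtain e1 e2 where "e1 \<in> gedges FE" "a \<in> e1" "e2 \<in> gedges FE" "b \<in> e2"
    using linked_path_halfs(3)[OF assms ab] by auto
  then show "a \<in> ghalfs FE \<and> b \<in> ghalfs FE" using edge_FE_halfs by blast
qed

lemma lift_arcs:
  assumes nb: "nonbacktracking T ts"
  obtains Y arc X where "\<And>i. i < length ts \<Longrightarrow> Y i \<in> snd (ts!i) \<and> X i \<in> fst (ts!(Suc i mod length ts))
    \<and> linked_path FE (Y i) (arc i) (X i) \<and> (\<forall>p\<in>set (arc i). silent p)"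
proof -
  define n where "n = length ts"
  have "\<forall>i\<in>{..<n}. \<exists>A. fst A \<in> snd (ts!i) \<and> snd (snd A) \<in> fst (ts!(Suc i mod n)) \<and>
      linked_path FE (fst A) (fst (snd A)) (snd (snd A)) \<and> (\<forall>p\<in>set (fst (snd A)). silent p)"
  proof
    fix i assume "i \<in> {..<n}"
    then have i: "i < n" "Suc i mod n < n" using Suc_mod_less by auto
    have edge: "{fst (ts!j), snd (ts!j)} \<in> tau F P" if "j < n" for j
      using nb nth_mem[OF that[unfolded n_def]]
      unfolding nonbacktracking_def trav_closed_walk_def by (auto simp: case_prod_beta)
    have "ginc T (snd (ts!i)) = ginc T (fst (ts!(Suc i mod n)))" "snd (ts!i) \<noteq> fst (ts!(Suc i mod n))"
      using nb i(1) unfolding nonbacktracking_def trav_closed_walk_def n_def by auto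
    then obtain y arc x where "y \<in> snd (ts!i)" "x \<in> fst (ts!(Suc i mod n))" "linked_path FE y arc x"
      "\<forall>p\<in>set arc. silent p"
      by (rule arc_between_traversals[OF edge[OF i(1)] edge[OF i(2)]])
    then show "\<exists>A. fst A \<in> snd (ts!i) \<and> snd (snd A) \<in> fst (ts!(Suc i mod n)) \<and>
      linked_path FE (fst A) (fst (snd A)) (snd (snd A)) \<and> (\<forall>p\<in>set (fst (snd A)). silent p)"
      by (intro exI[of _ "(y, arc, x)"]) simp
  qed
  from bchoice[OF this] obtain A where A: "\<forall>i\<in>{..<n}. fst (A i) \<in> snd (ts!i) \<and> snd (snd (A i)) \<in> fst (ts!(Suc i mod n)) \<and>
      linked_path FE (fst (A i)) (fst (snd (A i))) (snd (snd (A i))) \<and> (\<forall>p\<in>set (fst (snd (A i))). silent p)"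
    by blast
  then show thesis
  proof (intro that)
    fix i assume "i < length ts"
    then show "fst (A i) \<in> snd (ts!i) \<and> snd (snd (A i)) \<in> fst (ts!(Suc i mod length ts))
      \<and> linked_path FE (fst (A i)) (fst (snd (A i))) (snd (snd (A i)))
      \<and> (\<forall>p\<in>set (fst (snd (A i))). silent p)"
      using A unfolding n_def by blast
  qed
qed

lemma lift_nonbacktracking:
  assumes nb: "nonbacktracking T ts"
  obtains W where "closed_walk FE W" "proj P W = ts"
proof (cases "ts = []")
  case True
  then show thesis using that[of "[]"] by (simp add: closed_walk_def proj_def)
next
  case False
  obtain Y arc X where A: "\<And>i. i < length ts \<Longrightarrow> Y i \<in> snd (ts!i) \<and> X i \<in> fst (ts!(Suc i mod length ts))
    \<and> linked_path FE (Y i) (arc i) (X i) \<and> (\<forall>p\<in>set (arc i). silent p)"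
    by (rule lift_arcs[OF nb]) blast
  define n where "n = length ts"
  have n: "n > 0" using False unfolding n_def by simp
  note A = A[folded n_def]
  have edge: "{fst (ts!i), snd (ts!i)} \<in> tau F P" if "i < n" for i
    using nb nth_mem[OF that[unfolded n_def]]
    unfolding nonbacktracking_def trav_closed_walk_def by (auto simp: case_prod_beta)
  have cross: "X ((i + n - 1) mod n) \<in> fst (ts!i)" if i: "i < n" for i
  proof -
    have "Suc ((i + n - 1) mod n) mod n = i" using i n by (simp add: mod_Suc_eq)
    then show ?thesis using A[of "(i + n - 1) mod n"] n by simp
  qed
  have cross_pair: "X ((i + n - 1) mod n) \<noteq> Y i \<and> ginc F (X ((i + n - 1) mod n)) = ginc F (Y i)
      \<and> st (X ((i + n - 1) mod n)) = fst (ts!i) \<and> st (Y i) = snd (ts!i) \<and> fst (ts!i) \<noteq> snd (ts!i)"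
    if i: "i < n" for i
    using tau_cross_pair[OF edge[OF i] cross[OF i] conjunct1[OF A[OF i]]] by blast
  have "closed_walk FE (cyclic_join n Y arc X)"
  proof (rule closed_walk_cyclic_join[OF n])
    show "linked_path FE (Y i) (arc i) (X i)" if "i < n" for i using A[OF that] by blast
  next
    fix i a b assume i: "i < n" and ab: "(a, b) \<in> set ((X ((i + n - 1) mod n), Y i) # arc i)"
    have "X ((i + n - 1) mod n) \<in> ghalfs FE" "Y i \<in> ghalfs FE"
      using linked_path_FE_halfs(1,2) A[OF i] A[of "(i + n - 1) mod n"] n by auto
    then show "a \<in> ghalfs FE \<and> b \<in> ghalfs FE \<and> a \<noteq> b \<and> ginc FE a = ginc FE b"
      using ab linked_path_FE_halfs(3) cross_pair[OF i] A[OF i] unfolding silent_def by auto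
  qed
  moreover have "proj P (cyclic_join n Y arc X) = ts"
    unfolding n_def
  proof (rule proj_cyclic_join)
    fix i assume "i < length ts"
    then have i: "i < n" unfolding n_def .
    have "proj P (arc i) = []" using A[OF i] by (intro proj_silent) blast
    moreover have "proj P ((X ((i + n - 1) mod n), Y i) # arc i)
        = (st (X ((i + n - 1) mod n)), st (Y i)) # proj P (arc i)"
      using cross_pair[OF i] unfolding proj_def by (cases "ts!i") simp
    ultimately show "proj P ((X ((i + length ts - 1) mod length ts), Y i) # arc i) = [ts!i]"
      using cross_pair[OF i] unfolding n_def by (cases "ts!i") simp
  qed
  ultimately show thesis by (rule that)
qed

lemma orientation_FE: "orientation FE (\<lambda>e. SOME h. h \<in> e)"
proof (rule orientation_some, rule ballI)
  fix e assume "e \<in> gedges FE"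
  then have "card e = 2" using wf_graphD(5)[OF wf] by simp
  then show "e \<noteq> {}" by auto
qed

text \<open>Circuits of \<open>P\<close> project to the empty walk, so dropping them from \<open>\<Gamma>\<close> loses nothing.\<close>
lemma proj_sigma_in_span:
  assumes \<Gamma>: "\<forall>W\<in>\<Gamma>. closed_walk FE W" and D: "orientation T D" and D': "orientation FE D'"
    and W: "closed_walk FE W"
    and span: "(of_int_vec (sigma FE D' W) :: _ \<Rightarrow> 'a::comm_ring_1)
      \<in> fun_module.span ((\<lambda>W. of_int_vec (sigma FE D' W)) ` \<Gamma>)"
  shows "(of_int_vec (sigma_trav T D (proj P W)) :: _ \<Rightarrow> 'a)
    \<in> fun_module.span ((\<lambda>W. of_int_vec (sigma_trav T D W)) ` proj P ` remove_circuits \<Gamma> P)"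
proof -
  let ?L = "touch_map D D' :: ('h set \<Rightarrow> 'a) \<Rightarrow> _"
  let ?S = "(\<lambda>W. of_int_vec (sigma_trav T D W) :: _ \<Rightarrow> 'a) ` proj P ` remove_circuits \<Gamma> P"
  have L: "of_int_vec (sigma_trav T D (proj P W')) = ?L (of_int_vec (sigma FE D' W'))"
    if "closed_walk FE W'" for W'
    unfolding of_int_vec_def sigma_proj[OF that D D'] touch_map_of_int ..
  have image: "?L ` (\<lambda>W. of_int_vec (sigma FE D' W)) ` \<Gamma> \<subseteq> insert 0 ?S"
  proof
    fix y assume "y \<in> ?L ` (\<lambda>W. of_int_vec (sigma FE D' W)) ` \<Gamma>"
    then obtain W0 where W0: "W0 \<in> \<Gamma>" "y = of_int_vec (sigma_trav T D (proj P W0))"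
      using L \<Gamma> by auto
    show "y \<in> insert 0 ?S"
    proof (cases "W0 \<in> remove_circuits \<Gamma> P")
      case False
      then obtain C where "C \<in> P" "W0 \<in> C" using W0(1) unfolding remove_circuits_def by blast
      then have "y = 0" using W0(2) proj_circuit
        unfolding of_int_vec_def by (simp add: sigma_trav_Nil zero_fun_def)
      then show ?thesis by simp
    qed (use W0 in blast)
  qed
  have "insert 0 ?S \<subseteq> fun_module.span ?S"
    using fun_module.span_zero fun_module.span_superset[of ?S] by (rule insert_subsetI)
  then have "fun_module.span (?L ` (\<lambda>W. of_int_vec (sigma FE D' W)) ` \<Gamma>) \<subseteq> fun_module.span ?S"
    using fun_module.span_minimal[OF order_trans[OF image] fun_module.subspace_span] by blast
  moreover have "of_int_vec (sigma_trav T D (proj P W)) \<in> fun_module.span (?L ` (\<lambda>W. of_int_vec (sigma FE D' W)) ` \<Gamma>)"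
    unfolding L[OF W] module_hom.span_image[OF touch_map_hom] using span by blast
  ultimately show ?thesis by blast
qed

lemma Tch_cycle_spanning_set:
  assumes \<Gamma>: "cycle_spanning_set FE (closed_walk FE) (sigma FE) \<Gamma>"
  shows "cycle_spanning_set T (trav_closed_walk T) (sigma_trav T) (proj P ` remove_circuits \<Gamma> P)"
proof -
  have walks: "\<forall>W\<in>\<Gamma>. closed_walk FE W" using \<Gamma> unfolding cycle_spanning_set_def by blast
  let ?D' = "\<lambda>e. SOME h. h \<in> e"
  show ?thesis
  proof (rule cycle_spanning_setI)
    show "\<forall>W'\<in>proj P ` remove_circuits \<Gamma> P. trav_closed_walk T W'"
      using walks proj_trav_closed_walk unfolding remove_circuits_def by blast
  next
    fix D assume D: "orientation T D"
    have two: "\<forall>e\<in>gedges T. card e = 2" using wf_pregraphD(3)[OF wf_pregraph_Tch] by blast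
    show "(\<lambda>W. rat_vec (sigma_trav T D W)) ` proj P ` remove_circuits \<Gamma> P \<subseteq> cycle_space T D"
      using walks proj_trav_closed_walk sigma_trav_in_cycle_space[OF _ D two]
      unfolding remove_circuits_def by blast
    have "rat_vec (sigma_trav T D ts) \<in> fun_module.span
        ((\<lambda>W. rat_vec (sigma_trav T D W)) ` proj P ` remove_circuits \<Gamma> P)"
      if ts: "nonbacktracking T ts" for ts
    proof -
      obtain W where W: "closed_walk FE W" "proj P W = ts" by (rule lift_nonbacktracking[OF ts])
      have "rat_vec (sigma FE ?D' W) \<in> cycle_space FE ?D'"
        using sigma_in_cycle_space[OF W(1) orientation_FE] wf_graphD(5)[OF wf] by simp
      then have "rat_vec (sigma FE ?D' W) \<in> fun_module.span ((\<lambda>W. rat_vec (sigma FE ?D' W)) ` \<Gamma>)"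
        using cycle_spanning_set_spans[OF \<Gamma> orientation_FE] by blast
      from proj_sigma_in_span[OF walks D orientation_FE W(1) this[unfolded rat_vec_eq_of_int_vec]]
      show ?thesis unfolding W(2) rat_vec_eq_of_int_vec .
    qed
    then have "fun_module.span {rat_vec (sigma_trav T D ts) | ts. nonbacktracking T ts}
        \<subseteq> fun_module.span ((\<lambda>W. rat_vec (sigma_trav T D W)) ` proj P ` remove_circuits \<Gamma> P)"
      by (intro fun_module.span_minimal) auto
    with cycle_space_subset_span_nonbacktracking[OF wf_pregraph_Tch D]
    show "cycle_space T D \<subseteq> fun_module.span
        ((\<lambda>W. rat_vec (sigma_trav T D W)) ` proj P ` remove_circuits \<Gamma> P)"
      by (rule order_trans)
  qed
qed

lemma Tch_integral_set:
  assumes walks: "\<forall>W\<in>\<Gamma>. closed_walk FE W" and I: "integral_set FE (sigma FE) \<Gamma>"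
  shows "integral_set T (sigma_trav T) (proj P ` remove_circuits \<Gamma> P)"
  unfolding integral_set_def int_span_eq_span
proof (intro allI impI)
  fix D W' assume D: "orientation T D" and W': "closed_walk T W'"
  obtain W where W: "closed_walk FE W" "proj P W = etrav W'"
    by (rule lift_nonbacktracking[OF nonbacktracking_etrav[OF W']])
  let ?D' = "\<lambda>e. SOME h. h \<in> e"
  have "sigma FE ?D' W \<in> fun_module.span (sigma FE ?D' ` \<Gamma>)"
    using I W(1) orientation_FE unfolding integral_set_def int_span_eq_span by blast
  with proj_sigma_in_span[where 'a=int, OF walks D orientation_FE W(1)]
  show "sigma T D W' \<in> fun_module.span (sigma_trav T D ` proj P ` remove_circuits \<Gamma> P)"
    unfolding sigma_def W(2)[symmetric] by simp
qed

end

theorem mainTheorem7: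
  fixes F :: "('v, 'h) graph"
    and P :: "('h \<times> 'h) list set set"
    and E :: "'h set set"
    and \<Gamma> :: "('h \<times> 'h) list set"
  assumes "wf_graph F"
    and "four_regular F"
    and "circuit_partition F P"
    and "E \<subseteq> gedges F"
    and "\<forall>C\<in>P. card (traversed C \<inter> E) \<le> 1"
    and "cycle_spanning_set (del_edges F E) (closed_walk (del_edges F E))
           (sigma (del_edges F E)) \<Gamma>"
  shows "cycle_spanning_set (Tch F P) (trav_closed_walk (Tch F P))
           (sigma_trav (Tch F P)) (proj P ` remove_circuits \<Gamma> P)
         \<and> (integral_set (del_edges F E) (sigma (del_edges F E)) \<Gamma> \<longrightarrow>
              integral_set (Tch F P) (sigma_trav (Tch F P)) (proj P ` remove_circuits \<Gamma> P))"
proof -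
  interpret partitioned_graph F P E using assms(1-5) by unfold_locales
  have "\<forall>W\<in>\<Gamma>. closed_walk (del_edges F E) W" using assms(6) unfolding cycle_spanning_set_def by blast
  then show ?thesis using Tch_cycle_spanning_set[OF assms(6)] Tch_integral_set by blast
qed


end
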